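(* Let $A\in\mathbb{B}(\mathcal{H})$ with Cartesian decomposition $A=B+iC$ ($B,C$ self-adjoint), let $r\ge2$, $p,q>1$ with $\frac1p+\frac1q=1$, and let $f_1,g_1,f_2,g_2$ be non-negative continuous functions on $[0,\infty)$ with $f_1(t)g_1(t)=f_2(t)g_2(t)=t$ for all $t\ge0$. Then \[ w^r(A)\le\frac12\left\|f_1^{rp}(|B+C|)+f_2^{rp}(|B-C|)\right\|^{1/p}\left\|g_1^{rq}(|B+C|)+g_2^{rq}(|B-C|)\right\|^{1/q} \] and \[ w^r(A)\le\frac12\left\|f_1^{rp}(|B+C|)+g_2^{rp}(|B-C|)\right\|^{1/p}\left\|g_1^{rq}(|B+C|)+f_2^{rq}(|B-C|)\right\|^{1/q}. \]
   Context: $\mathcal{H}$ is a complex Hilbert space; $w(X)=\sup\{|\langle Xx,x\rangle|:\|x\|=1\}$ is the numerical radius; $|X|=(X^*X)^{1/2}$; the Cartesian decomposition is $B=\frac{A+A^*}{2}$, $C=\frac{A-A^*}{2i}$; $f^s(|X|)$ denotes $(f(|X|))^s$ via continuous functional calculus; $\|\cdot\|$ is the operator norm. *)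

theory Defs
  imports "HOL-Analysis.Analysis" "HOL-Computational_Algebra.Polynomial"
begin

class chilbert = ab_group_add +
  fixes hscale :: "complex \<Rightarrow> 'a \<Rightarrow> 'a" (infixr \<open>*\<^sub>H\<close> 75)
    and hinner :: "'a \<Rightarrow> 'a \<Rightarrow> complex"
  assumes hscale_add_right: "a *\<^sub>H (x + y) = a *\<^sub>H x + a *\<^sub>H y"
    and hscale_add_left: "(a + b) *\<^sub>H x = a *\<^sub>H x + b *\<^sub>H x"
    and hscale_hscale: "a *\<^sub>H (b *\<^sub>H x) = (a * b) *\<^sub>H x"
    and hscale_one: "1 *\<^sub>H x = x"
    and hinner_add_right: "hinner x (y + z) = hinner x y + hinner x z"
    and hinner_scale_right: "hinner x (a *\<^sub>H y) = a * hinner x y"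
    and hinner_commute: "hinner x y = cnj (hinner y x)"
    and hinner_nonneg: "0 \<le> Re (hinner x x)"
    and hinner_eq_zero: "hinner x x = 0 \<Longrightarrow> x = 0"
    and hcomplete: "(\<forall>e>0. \<exists>N. \<forall>m\<ge>N. \<forall>n\<ge>N.
                       sqrt (Re (hinner (X m - X n) (X m - X n))) < e)
                    \<Longrightarrow> \<exists>L. (\<lambda>n. sqrt (Re (hinner (X n - L) (X n - L)))) \<longlonglongrightarrow> 0"

definition hnorm :: "'a::chilbert \<Rightarrow> real" where
  "hnorm x = sqrt (Re (hinner x x))"

definition bounded_op :: "('a::chilbert \<Rightarrow> 'a) \<Rightarrow> bool" where
  "bounded_op T \<longleftrightarrow> (\<forall>x y. T (x + y) = T x + T y) \<and> (\<forall>a x. T (a *\<^sub>H x) = a *\<^sub>H T x)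
     \<and> (\<exists>K. \<forall>x. hnorm (T x) \<le> K * hnorm x)"

definition opnorm :: "('a::chilbert \<Rightarrow> 'a) \<Rightarrow> real" where
  "opnorm T = Sup {hnorm (T x) | x. hnorm x \<le> 1}"

definition adjoint :: "('a::chilbert \<Rightarrow> 'a) \<Rightarrow> ('a \<Rightarrow> 'a)" where
  "adjoint T = (SOME S. \<forall>x y. hinner (T x) y = hinner x (S y))"

definition selfadjoint :: "('a::chilbert \<Rightarrow> 'a) \<Rightarrow> bool" where
  "selfadjoint T \<longleftrightarrow> (\<forall>x y. hinner (T x) y = hinner x (T y))"

text \<open>Numerical radius (sup over the closed unit ball; equal to the sup over
  the unit sphere for nonzero spaces, and 0 for the zero space).\<close>
definition numrad :: "('a::chilbert \<Rightarrow> 'a) \<Rightarrow> real" where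
  "numrad T = Sup {cmod (hinner x (T x)) | x. hnorm x \<le> 1}"

definition poly_op :: "real poly \<Rightarrow> ('a::chilbert \<Rightarrow> 'a) \<Rightarrow> ('a \<Rightarrow> 'a)" where
  "poly_op P T = (\<lambda>x. \<Sum>i\<le>degree P. complex_of_real (coeff P i) *\<^sub>H (T ^^ i) x)"

text \<open>A compact interval containing the spectrum of a self-adjoint operator T.\<close>
definition spec_lo :: "('a::chilbert \<Rightarrow> 'a) \<Rightarrow> real" where
  "spec_lo T = Inf {Re (hinner x (T x)) | x. hnorm x \<le> 1}"

definition spec_hi :: "('a::chilbert \<Rightarrow> 'a) \<Rightarrow> real" where
  "spec_hi T = Sup {Re (hinner x (T x)) | x. hnorm x \<le> 1}"

text \<open>f(T): the operator-norm limit of P_n(T) for any sequence of real polynomials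
  P_n converging uniformly to f on an interval containing the spectrum of T
  (Weierstrass approximation); this is the continuous functional calculus.\<close>
definition fcalc :: "(real \<Rightarrow> real) \<Rightarrow> ('a::chilbert \<Rightarrow> 'a) \<Rightarrow> ('a \<Rightarrow> 'a)" where
  "fcalc f T = (THE S. bounded_op S \<and>
     (\<forall>P :: nat \<Rightarrow> real poly.
        (\<forall>e>0. \<exists>N. \<forall>n\<ge>N. \<forall>t\<in>{spec_lo T..spec_hi T}. \<bar>poly (P n) t - f t\<bar> < e)
        \<longrightarrow> (\<lambda>n. opnorm (\<lambda>x. poly_op (P n) T x - S x)) \<longlonglongrightarrow> 0))"

definition absop :: "('a::chilbert \<Rightarrow> 'a) \<Rightarrow> ('a \<Rightarrow> 'a)" where
  "absop X = fcalc sqrt (\<lambda>x. adjoint X (X x))"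

text \<open>f^s(|X|) = (f(|X|))^s, i.e. (fpow f s X) with X already the positive operator.\<close>
definition fpow :: "(real \<Rightarrow> real) \<Rightarrow> real \<Rightarrow> ('a::chilbert \<Rightarrow> 'a) \<Rightarrow> ('a \<Rightarrow> 'a)" where
  "fpow f s X = fcalc (\<lambda>t. t powr s) (fcalc f X)"

end

theory Submission
  imports Defs "HOL-Computational_Algebra.Fundamental_Theorem_Algebra"
begin

text \<open>For a unit vector x, \<open>\<langle>Ax,x\<rangle> = \<langle>Bx,x\<rangle> + i\<langle>Cx,x\<rangle>\<close> gives
  \<open>|\<langle>Ax,x\<rangle>|^2 = (\<langle>(B+C)x,x\<rangle>^2 + \<langle>(B-C)x,x\<rangle>^2) / 2\<close>, and convexity of
  \<open>t \<mapsto> t^(r/2)\<close> bounds \<open>|\<langle>Ax,x\<rangle>|^r\<close> by half the sum of \<open>|\<langle>Tx,x\<rangle>|^r\<close> over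
  \<open>T = B + C\<close> and \<open>T = B - C\<close>. For each such T the mixed Schwarz inequality
  \<open>|\<langle>Tx,x\<rangle>| \<le> \<langle>|T|x,x\<rangle> = \<langle>f(|T|)x, g(|T|)x\<rangle> \<le> \<parallel>f(|T|)x\<parallel> \<parallel>g(|T|)x\<parallel>\<close> holds,
  and McCarthy's inequality \<open>\<parallel>Sx\<parallel>^k \<le> \<langle>S^k x,x\<rangle>\<close> (S positive, k \<ge> 2) turns the two
  norms into quadratic forms of \<open>f^(rp)(|T|)\<close> and \<open>g^(rq)(|T|)\<close>. Hoelder's inequality for
  two terms joins the two halves, and the quadratic forms are bounded by operator norms.
  The second inequality is the first one with f2 and g2 exchanged.

  The functional calculus rests on a Positivstellensatz: a polynomial that is nonnegative
  on an interval [a,b] is a nonnegative combination of products \<open>(t-a)^i (b-t)^j w(t)^2\<close>,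
  and each of these maps a self-adjoint T with \<open>a \<le> T \<le> b\<close> to a positive operator. Hence
  the polynomial calculus is monotone and contractive for the sup norm on [a,b], and it
  extends to continuous functions by Weierstrass approximation and completeness of the
  bounded operators.\<close>

lemma hscale_zero_left[simp]: "0 *\<^sub>H x = (0::'a::chilbert)"
  using hscale_add_left[of 0 0 x] by simp

lemma hscale_zero_right[simp]: "a *\<^sub>H (0::'a::chilbert) = 0"
  using hscale_add_right[of a 0 0] by simp

lemma hscale_minus_left: "(- a) *\<^sub>H x = - (a *\<^sub>H (x::'a::chilbert))"
  using hscale_add_left[of a "-a" x] by (simp add: eq_neg_iff_add_eq_0 add.commute)

lemma hscale_sum_right: "a *\<^sub>H (sum f S) = sum (\<lambda>i. a *\<^sub>H (f i::'a::chilbert)) S"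
  by (induct S rule: infinite_finite_induct) (auto simp: hscale_add_right)

lemma hinner_add_left: "hinner (x + y) (z::'a::chilbert) = hinner x z + hinner y z"
  by (metis complex_cnj_add hinner_add_right hinner_commute)

lemma hinner_scale_left: "hinner (a *\<^sub>H x) (y::'a::chilbert) = cnj a * hinner x y"
  by (metis complex_cnj_mult hinner_commute hinner_scale_right)

lemma hinner_zero_right[simp]: "hinner x (0::'a::chilbert) = 0"
  using hinner_add_right[of x 0 0] by simp

lemma hinner_zero_left[simp]: "hinner (0::'a::chilbert) x = 0"
  using hinner_add_left[of 0 0 x] by simp

lemma hinner_minus_right: "hinner x (- y) = - hinner x (y::'a::chilbert)"
  using hinner_add_right[of x y "-y"] by (simp add: eq_neg_iff_add_eq_0 add.commute)

lemma hinner_minus_left: "hinner (- x) y = - hinner x (y::'a::chilbert)"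
  using hinner_add_left[of x "-x" y] by (simp add: eq_neg_iff_add_eq_0 add.commute)

lemma hinner_diff_right: "hinner x (y - z) = hinner x y - hinner x (z::'a::chilbert)"
  by (simp only: diff_conv_add_uminus hinner_add_right hinner_minus_right)

lemma hinner_diff_left: "hinner (x - y) z = hinner x z - hinner y (z::'a::chilbert)"
  by (simp only: diff_conv_add_uminus hinner_add_left hinner_minus_left)

lemma hinner_sum_right: "hinner x (sum f S) = sum (\<lambda>i. hinner x (f i::'a::chilbert)) S"
  by (induct S rule: infinite_finite_induct) (auto simp: hinner_add_right)

lemma hinner_sum_left: "hinner (sum f S) y = sum (\<lambda>i. hinner (f i) (y::'a::chilbert)) S"
  by (induct S rule: infinite_finite_induct) (auto simp: hinner_add_left)

lemmas hinner_simps = hinner_add_left hinner_add_right hinner_scale_left hinner_scale_right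
  hinner_minus_left hinner_minus_right hinner_diff_left hinner_diff_right

lemma hinner_self_Im: "Im (hinner x (x::'a::chilbert)) = 0"
  using hinner_commute[of x x] by (metis Reals_cnj_iff complex_is_Real_iff)

lemma hnorm_nonneg[simp]: "0 \<le> hnorm x"
  unfolding hnorm_def by (rule real_sqrt_ge_zero[OF hinner_nonneg])

lemma hnorm_sq: "hnorm x ^ 2 = Re (hinner x (x::'a::chilbert))"
  unfolding hnorm_def by (rule real_sqrt_pow2[OF hinner_nonneg])

lemma hinner_self_hnorm: "hinner x (x::'a::chilbert) = complex_of_real (hnorm x ^ 2)"
  using hinner_self_Im[of x] by (simp add: hnorm_sq complex_eq_iff)

lemma hnorm_zero[simp]: "hnorm (0::'a::chilbert) = 0"
  by (simp add: hnorm_def)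

lemma hnorm_eq_0[simp]: "hnorm x = 0 \<longleftrightarrow> x = (0::'a::chilbert)"
  by (metis hinner_eq_zero hinner_self_hnorm hnorm_zero of_real_0 power_zero_numeral)

lemma hnorm_pos: "x \<noteq> 0 \<Longrightarrow> 0 < hnorm (x::'a::chilbert)"
  using hnorm_eq_0 hnorm_nonneg by (metis order_less_le)

lemma hnorm_scale: "hnorm (a *\<^sub>H x) = cmod a * hnorm (x::'a::chilbert)"
proof -
  have aa: "cnj a * a = complex_of_real ((cmod a)^2)"
    by (metis complex_norm_square mult.commute)
  have "hinner (a *\<^sub>H x) (a *\<^sub>H x) = complex_of_real ((cmod a)^2) * hinner x x"
    by (simp only: hinner_scale_left hinner_scale_right mult.assoc[symmetric]
        mult.commute[of a "cnj a"] aa)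
  then have "hnorm (a *\<^sub>H x) ^2 = ((cmod a) * hnorm x)^2"
    by (simp add: hnorm_sq[of "a *\<^sub>H x"] power_mult_distrib hinner_self_hnorm[of x])
  then show ?thesis
    by simp
qed

lemma hnorm_minus: "hnorm (- x) = hnorm (x::'a::chilbert)"
  using hnorm_scale[of "-1" x] by (simp add: hscale_minus_left hscale_one)

lemma hnorm_diff_commute: "hnorm (x - y) = hnorm (y - (x::'a::chilbert))"
  by (metis hnorm_minus minus_diff_eq)

lemma hnorm_normalize:
  assumes "x \<noteq> 0"
  shows "hnorm (complex_of_real (1 / hnorm x) *\<^sub>H x) = 1"
  using assms hnorm_pos[OF assms] by (simp add: hnorm_scale norm_divide)

lemma hnorm_cauchy_schwarz: "cmod (hinner x y) \<le> hnorm x * hnorm (y::'a::chilbert)"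
proof (cases "y = 0")
  case True then show ?thesis by simp
next
  case False
  define c where "c = hinner y y"
  define b where "b = hinner y x"
  have c: "c = complex_of_real (hnorm y ^ 2)" by (simp add: c_def hinner_self_hnorm)
  have bx: "hinner x y = cnj b" by (simp add: b_def hinner_commute[of x y])
  have bb: "cnj b * b = complex_of_real ((cmod b)^2)" by (metis complex_norm_square mult.commute)
  have "hinner (c *\<^sub>H x - b *\<^sub>H y) (c *\<^sub>H x - b *\<^sub>H y) = c * (c * hinner x x - cnj b * b)"
    by (simp add: hinner_simps bx c b_def[symmetric] c_def[symmetric] algebra_simps)
  also have "Re \<dots> = hnorm y ^ 2 * (hnorm y ^ 2 * hnorm x ^ 2 - (cmod b)^2)"
    unfolding bb c hinner_self_hnorm[of x]
    by (simp only: of_real_mult[symmetric] of_real_diff[symmetric] Re_complex_of_real)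
  finally have "0 \<le> hnorm y ^ 2 * (hnorm y ^ 2 * hnorm x ^ 2 - (cmod b)^2)"
    by (metis hinner_nonneg)
  moreover have "0 < hnorm y ^ 2" using False hnorm_pos by auto
  ultimately have "(cmod b)^2 \<le> (hnorm x * hnorm y)^2"
    by (simp add: zero_le_mult_iff power_mult_distrib mult.commute)
  then show ?thesis
    by (metis bx complex_mod_cnj hnorm_nonneg mult_nonneg_nonneg power2_le_imp_le)
qed

lemma hnorm_triangle_ineq: "hnorm (x + y) \<le> hnorm x + hnorm (y::'a::chilbert)"
proof -
  have "hnorm (x + y) ^ 2 = Re (hinner x x) + Re (hinner x y) + Re (hinner y x) + Re (hinner y y)"
    by (simp add: hnorm_sq hinner_simps)
  also have "Re (hinner y x) = Re (hinner x y)"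
    by (subst hinner_commute) simp
  also have "Re (hinner x y) \<le> hnorm x * hnorm y"
    using hnorm_cauchy_schwarz[of x y] complex_Re_le_cmod order_trans by blast
  finally have "hnorm (x + y) ^ 2 \<le> (hnorm x + hnorm y)^2"
    by (simp add: hnorm_sq[symmetric] power2_sum)
  then show ?thesis
    using power2_le_imp_le by (metis add_nonneg_nonneg hnorm_nonneg)
qed

lemma hnorm_triangle_diff: "hnorm (x - z) \<le> hnorm (x - y) + hnorm (y - (z::'a::chilbert))"
  using hnorm_triangle_ineq[of "x - y" "y - z"] by simp

lemma hnorm_diff_le: "hnorm (x - y) \<le> hnorm x + hnorm (y::'a::chilbert)"
  using hnorm_triangle_ineq[of x "-y"] by (simp add: hnorm_minus)

lemma bounded_op_add: "bounded_op T \<Longrightarrow> T (x + y) = T x + T (y::'a::chilbert)"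
  by (simp add: bounded_op_def)

lemma bounded_op_scale: "bounded_op T \<Longrightarrow> T (a *\<^sub>H x) = a *\<^sub>H T (x::'a::chilbert)"
  by (simp add: bounded_op_def)

lemma bounded_op_zero: "bounded_op T \<Longrightarrow> T 0 = (0::'a::chilbert)"
  using bounded_op_scale[of T 0 0] by simp

lemma bounded_op_minus: "bounded_op T \<Longrightarrow> T (- x) = - T (x::'a::chilbert)"
  using bounded_op_scale[of T "-1" x] by (simp add: hscale_minus_left hscale_one)

lemma bounded_op_diff: "bounded_op T \<Longrightarrow> T (x - y) = T x - T (y::'a::chilbert)"
  by (simp only: diff_conv_add_uminus bounded_op_add bounded_op_minus)

lemma bounded_op_sum: "bounded_op T \<Longrightarrow> T (sum f S) = sum (\<lambda>i. T (f i::'a::chilbert)) S"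
  by (induct S rule: infinite_finite_induct) (auto simp: bounded_op_add bounded_op_zero)

lemma bounded_op_bound:
  assumes "bounded_op T"
  obtains K where "K \<ge> 0" "\<And>x. hnorm (T x) \<le> K * hnorm (x::'a::chilbert)"
proof -
  obtain K where K: "\<forall>x. hnorm (T x) \<le> K * hnorm x" using assms by (auto simp: bounded_op_def)
  have "hnorm (T x) \<le> max K 0 * hnorm x" for x
    using K by (metis max.cobounded1 mult_right_mono hnorm_nonneg order_trans)
  then show ?thesis using that[of "max K 0"] by auto
qed

lemma bounded_opI:
  assumes "\<And>x y. T (x + y) = T x + T y" "\<And>a x. T (a *\<^sub>H x) = a *\<^sub>H T x"
    "\<And>x. hnorm (T x) \<le> K * hnorm (x::'a::chilbert)"
  shows "bounded_op T"
  using assms unfolding bounded_op_def by blast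

lemma bounded_op_ident: "bounded_op (\<lambda>x::'a::chilbert. x)"
  by (rule bounded_opI[where K=1]) auto

lemma bounded_op_zero_op: "bounded_op (\<lambda>x::'a::chilbert. 0)"
  by (rule bounded_opI[where K=1]) auto

lemma bounded_op_add_op:
  assumes "bounded_op S" "bounded_op T"
  shows "bounded_op (\<lambda>x::'a::chilbert. S x + T x)"
proof -
  obtain K1 K2 where K: "\<And>x. hnorm (S x) \<le> K1 * hnorm x" "\<And>x. hnorm (T x) \<le> K2 * hnorm x"
    using assms bounded_op_bound by metis
  show ?thesis
  proof (rule bounded_opI[where K="K1+K2"])
    fix x show "hnorm (S x + T x) \<le> (K1 + K2) * hnorm x"
      using hnorm_triangle_ineq[of "S x" "T x"] K[of x] by (simp add: distrib_right)
  qed (use assms in \<open>auto simp: bounded_op_add bounded_op_scale hscale_add_right\<close>)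
qed

lemma bounded_op_scale_op:
  assumes "bounded_op T"
  shows "bounded_op (\<lambda>x::'a::chilbert. c *\<^sub>H T x)"
proof -
  obtain K where K: "K \<ge> 0" "\<And>x. hnorm (T x) \<le> K * hnorm x"
    using assms bounded_op_bound by metis
  show ?thesis
  proof (rule bounded_opI[where K="cmod c * K"])
    fix x show "hnorm (c *\<^sub>H T x) \<le> (cmod c * K) * hnorm x"
      using K by (simp add: hnorm_scale mult.assoc mult_left_mono)
  qed (use assms in \<open>auto simp: bounded_op_add bounded_op_scale hscale_add_right
        hscale_hscale mult.commute\<close>)
qed

lemma bounded_op_diff_op:
  assumes "bounded_op S" "bounded_op T"
  shows "bounded_op (\<lambda>x::'a::chilbert. S x - T x)"
  using bounded_op_add_op[OF assms(1) bounded_op_scale_op[OF assms(2), of "-1"]]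
  by (simp add: hscale_minus_left hscale_one)

lemma bounded_op_comp:
  assumes "bounded_op S" "bounded_op T"
  shows "bounded_op (\<lambda>x::'a::chilbert. S (T x))"
proof -
  obtain K1 K2 where K: "K1 \<ge> 0" "\<And>x. hnorm (S x) \<le> K1 * hnorm x"
    "\<And>x. hnorm (T x) \<le> K2 * hnorm x"
    using assms bounded_op_bound by metis
  show ?thesis
  proof (rule bounded_opI[where K="K1*K2"])
    fix x show "hnorm (S (T x)) \<le> (K1 * K2) * hnorm x"
      using K by (metis mult.assoc mult_left_mono order_trans)
  qed (use assms in \<open>auto simp: bounded_op_add bounded_op_scale\<close>)
qed

lemma bounded_op_sum_op:
  "(\<And>i. i \<in> I \<Longrightarrow> bounded_op (F i)) \<Longrightarrow> bounded_op (\<lambda>x::'a::chilbert. \<Sum>i\<in>I. F i x)"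
  by (induct I rule: infinite_finite_induct) (simp_all add: bounded_op_zero_op bounded_op_add_op)

lemma bounded_op_funpow: "bounded_op T \<Longrightarrow> bounded_op (T ^^ n :: 'a::chilbert \<Rightarrow> 'a)"
  by (induct n) (simp_all add: bounded_op_ident[unfolded id_def[symmetric]] bounded_op_comp comp_def)

lemma bdd_above_opnorm_values:
  assumes "bounded_op T"
  shows "bdd_above {hnorm (T x) | x. hnorm (x::'a::chilbert) \<le> 1}"
proof -
  obtain K where K: "K \<ge> 0" "\<And>x. hnorm (T x) \<le> K * hnorm x"
    using assms bounded_op_bound by metis
  have "hnorm (T x) \<le> K" if "hnorm x \<le> 1" for x
    using K that by (metis mult_left_mono mult.right_neutral order_trans)
  then show ?thesis unfolding bdd_above_def by blast
qed

lemma hnorm_le_opnorm_unit: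
  assumes "bounded_op T" "hnorm x \<le> 1"
  shows "hnorm (T x) \<le> opnorm T"
  unfolding opnorm_def using assms bdd_above_opnorm_values by (auto intro!: cSup_upper)

lemma opnorm_nonneg: "bounded_op T \<Longrightarrow> 0 \<le> opnorm (T::'a::chilbert\<Rightarrow>'a)"
  using hnorm_le_opnorm_unit[of T 0] by (simp add: bounded_op_zero)

lemma hnorm_le_opnorm:
  assumes "bounded_op T"
  shows "hnorm (T x) \<le> opnorm T * hnorm (x::'a::chilbert)"
proof (cases "x = 0")
  case True then show ?thesis by (simp add: bounded_op_zero assms)
next
  case False
  have hx: "hnorm x > 0" using False hnorm_pos by auto
  have "hnorm (T (complex_of_real (1 / hnorm x) *\<^sub>H x)) \<le> opnorm T"
    using hnorm_le_opnorm_unit[OF assms] hnorm_normalize[OF False] by simp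
  then show ?thesis
    using hx by (simp add: bounded_op_scale[OF assms] hnorm_scale norm_divide divide_le_eq mult.commute)
qed

lemma opnorm_le_unit:
  assumes "\<And>x. hnorm x \<le> 1 \<Longrightarrow> hnorm (T x) \<le> K"
  shows "opnorm T \<le> K"
  unfolding opnorm_def using assms by (intro cSup_least) (auto intro!: exI[of _ 0])

lemma opnorm_leI:
  assumes "K \<ge> 0" "\<And>x. hnorm (T x) \<le> K * hnorm x"
  shows "opnorm T \<le> K"
  using assms by (intro opnorm_le_unit) (metis mult_left_mono mult.right_neutral order_trans)

lemma opnorm_add_le:
  assumes "bounded_op S" "bounded_op T"
  shows "opnorm (\<lambda>x::'a::chilbert. S x + T x) \<le> opnorm S + opnorm T"
  using assms opnorm_nonneg[OF assms(1)] opnorm_nonneg[OF assms(2)]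
  by (intro opnorm_leI)
    (auto intro: order_trans[OF hnorm_triangle_ineq] add_mono hnorm_le_opnorm simp: distrib_right)

lemma opnorm_diff_triangle:
  assumes "bounded_op A" "bounded_op B" "bounded_op C"
  shows "opnorm (\<lambda>x::'a::chilbert. A x - C x) \<le> opnorm (\<lambda>x. A x - B x) + opnorm (\<lambda>x. B x - C x)"
  using opnorm_add_le[of "\<lambda>x. A x - B x" "\<lambda>x. B x - C x"] assms by (simp add: bounded_op_diff_op)

lemma opnorm_diff_commute: "opnorm (\<lambda>x. S x - T x) = opnorm (\<lambda>x::'a::chilbert. T x - S x)"
  unfolding opnorm_def by (metis hnorm_diff_commute)

lemma opnorm_le_0_imp_zero:
  assumes "bounded_op T" "opnorm T \<le> 0"
  shows "T x = (0::'a::chilbert)"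
  using hnorm_le_opnorm[OF assms(1), of x] assms(2) opnorm_nonneg[OF assms(1)]
  by (metis antisym hnorm_eq_0 hnorm_nonneg mult_zero_left)

lemma cmod_qform_le_opnorm:
  assumes "bounded_op T" "hnorm x \<le> 1"
  shows "cmod (hinner x (T x)) \<le> opnorm (T::'a::chilbert \<Rightarrow> 'a)"
proof -
  have "cmod (hinner x (T x)) \<le> hnorm x * hnorm (T x)" by (rule hnorm_cauchy_schwarz)
  also have "\<dots> \<le> 1 * opnorm T"
    using assms hnorm_le_opnorm_unit[OF assms] by (intro mult_mono) auto
  finally show ?thesis by simp
qed

lemma selfadjoint_qform_real:
  "selfadjoint T \<Longrightarrow> hinner x (T x) = complex_of_real (Re (hinner x (T x)))"
  unfolding selfadjoint_def
  by (metis Reals_cnj_iff hinner_commute of_real_Re)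

lemma selfadjoint_add_op:
  "selfadjoint S \<Longrightarrow> selfadjoint T \<Longrightarrow> selfadjoint (\<lambda>x::'a::chilbert. S x + T x)"
  by (simp add: selfadjoint_def hinner_add_left hinner_add_right)

lemma selfadjoint_diff_op:
  "selfadjoint S \<Longrightarrow> selfadjoint T \<Longrightarrow> selfadjoint (\<lambda>x::'a::chilbert. S x - T x)"
  by (simp add: selfadjoint_def hinner_diff_left hinner_diff_right)

lemma selfadjoint_funpow:
  assumes "selfadjoint T"
  shows "hinner ((T ^^ n) x) y = hinner x ((T ^^ n) (y::'a::chilbert))"
proof (induct n arbitrary: x y)
  case (Suc n)
  have "hinner ((T ^^ Suc n) x) y = hinner ((T ^^ n) x) (T y)"
    using assms by (simp add: selfadjoint_def)
  also have "\<dots> = hinner x ((T ^^ Suc n) y)" by (simp add: Suc funpow_Suc_right del: funpow.simps)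
  finally show ?case .
qed simp

lemma adjoint_selfadjoint:
  assumes "selfadjoint T"
  shows "adjoint T = (T::'a::chilbert \<Rightarrow> 'a)"
proof
  fix y
  have "\<forall>x y. hinner (T x) y = hinner x (adjoint T y)"
    unfolding adjoint_def by (rule someI[of _ T]) (use assms in \<open>simp add: selfadjoint_def\<close>)
  then have "hinner (adjoint T y - T y) (adjoint T y - T y) = 0"
    using assms by (simp add: selfadjoint_def hinner_diff_right)
  then show "adjoint T y = T y" using hinner_eq_zero by fastforce
qed

lemma bdd_qform_values:
  assumes "bounded_op T"
  shows "bdd_above {Re (hinner x (T x)) | x. hnorm (x::'a::chilbert) \<le> 1}"
    and "bdd_below {Re (hinner x (T x)) | x. hnorm (x::'a::chilbert) \<le> 1}"
proof -
  have b: "\<bar>Re (hinner x (T x))\<bar> \<le> opnorm T" if "hnorm x \<le> 1" for x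
    using abs_Re_le_cmod cmod_qform_le_opnorm[OF assms that] by (rule order_trans)
  show "bdd_above {Re (hinner x (T x)) | x. hnorm x \<le> 1}"
    unfolding bdd_above_def by (rule exI[of _ "opnorm T"]) (use b in \<open>auto simp: abs_le_iff\<close>)
  show "bdd_below {Re (hinner x (T x)) | x. hnorm x \<le> 1}"
    unfolding bdd_below_def by (rule exI[of _ "- opnorm T"]) (use b in \<open>force simp: abs_le_iff\<close>)
qed

lemma spec_lo_le_0: "bounded_op T \<Longrightarrow> spec_lo T \<le> 0"
  unfolding spec_lo_def using bdd_qform_values(2)
  by (intro cInf_lower[of 0]) (auto intro!: exI[of _ 0])

lemma spec_hi_ge_0: "bounded_op T \<Longrightarrow> 0 \<le> spec_hi T"
  unfolding spec_hi_def using bdd_qform_values(1)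
  by (intro cSup_upper[of 0]) (auto intro!: exI[of _ 0])

lemma spec_lo_le_spec_hi: "bounded_op T \<Longrightarrow> spec_lo T \<le> spec_hi T"
  using spec_lo_le_0 spec_hi_ge_0 by fastforce

lemma qform_normalize:
  assumes "bounded_op T" "x \<noteq> 0"
  defines "y \<equiv> complex_of_real (1 / hnorm x) *\<^sub>H x"
  shows "Re (hinner x (T x)) = hnorm x ^ 2 * Re (hinner y (T y))"
proof -
  have "hinner y (T y) = complex_of_real (1 / hnorm x ^ 2) * hinner x (T x)"
    by (simp add: y_def bounded_op_scale[OF assms(1)] hinner_scale_left hinner_scale_right
        power2_eq_square)
  then show ?thesis using hnorm_pos[OF assms(2)] by simp
qed

lemma spec_lo_le_qform:
  assumes "bounded_op T"
  shows "spec_lo T * hnorm x ^ 2 \<le> Re (hinner x (T (x::'a::chilbert)))"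
proof (cases "x = 0")
  case True then show ?thesis by (simp add: bounded_op_zero assms)
next
  case False
  define y where "y = complex_of_real (1 / hnorm x) *\<^sub>H x"
  have "spec_lo T \<le> Re (hinner y (T y))"
    unfolding spec_lo_def using bdd_qform_values(2)[OF assms] hnorm_normalize[OF False]
    by (intro cInf_lower) (auto simp: y_def)
  then show ?thesis using qform_normalize[OF assms False, folded y_def]
    by (metis mult.commute mult_right_mono zero_le_power2)
qed

lemma qform_le_spec_hi:
  assumes "bounded_op T"
  shows "Re (hinner x (T (x::'a::chilbert))) \<le> spec_hi T * hnorm x ^ 2"
proof (cases "x = 0")
  case True then show ?thesis by (simp add: bounded_op_zero assms)
next
  case False
  define y where "y = complex_of_real (1 / hnorm x) *\<^sub>H x"
  have "Re (hinner y (T y)) \<le> spec_hi T"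
    unfolding spec_hi_def using bdd_qform_values(1)[OF assms] hnorm_normalize[OF False]
    by (intro cSup_upper) (auto simp: y_def)
  then show ?thesis using qform_normalize[OF assms False, folded y_def]
    by (metis mult.commute mult_right_mono zero_le_power2)
qed

definition positive_op :: "('a::chilbert \<Rightarrow> 'a) \<Rightarrow> bool" where
  "positive_op T \<longleftrightarrow> (\<forall>x. 0 \<le> Re (hinner x (T x)))"

lemma positive_op_add: "positive_op S \<Longrightarrow> positive_op T \<Longrightarrow> positive_op (\<lambda>x. S x + T x)"
  by (simp add: positive_op_def hinner_add_right)

lemma positive_op_scale:
  "positive_op S \<Longrightarrow> 0 \<le> c \<Longrightarrow> positive_op (\<lambda>x. complex_of_real c *\<^sub>H S x)"
  by (simp add: positive_op_def hinner_scale_right)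

lemma positive_op_spec_lo: "positive_op T \<Longrightarrow> spec_lo T = 0"
  unfolding spec_lo_def positive_op_def
  by (rule cInf_eq_minimum) (auto intro!: exI[of _ 0])

lemma poly_op_degree_le:
  assumes "degree P \<le> n"
  shows "poly_op P T x = (\<Sum>i\<le>n. complex_of_real (coeff P i) *\<^sub>H (T ^^ i) (x::'a::chilbert))"
  unfolding poly_op_def using assms
  by (intro sum.mono_neutral_left) (auto simp: coeff_eq_0)

lemma poly_op_add: "poly_op (P + Q) T x = poly_op P T x + poly_op Q T (x::'a::chilbert)"
  using degree_add_le_max[of P Q]
  by (simp add: poly_op_degree_le[of _ "max (degree P) (degree Q)"] hscale_add_left sum.distrib)

lemma poly_op_smult:
  "poly_op (smult c P) T x = complex_of_real c *\<^sub>H poly_op P T (x::'a::chilbert)"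
  by (simp add: poly_op_degree_le[of _ "degree P"] hscale_sum_right hscale_hscale)

lemma poly_op_diff: "poly_op (P - Q) T x = poly_op P T x - poly_op Q T (x::'a::chilbert)"
  using poly_op_add[of P "smult (-1) Q" T x] poly_op_smult[of "-1" Q T x]
  by (simp add: hscale_minus_left hscale_one)

lemma poly_op_const: "poly_op [:c:] T x = complex_of_real c *\<^sub>H (x::'a::chilbert)"
  by (simp add: poly_op_def)

lemma poly_op_zero[simp]: "poly_op 0 T x = (0::'a::chilbert)"
  by (simp add: poly_op_def)

lemma poly_op_one: "poly_op 1 T x = (x::'a::chilbert)"
  by (simp add: poly_op_def hscale_one)

lemma poly_op_pCons:
  assumes "bounded_op T"
  shows "poly_op (pCons c P) T x = complex_of_real c *\<^sub>H x + T (poly_op P T (x::'a::chilbert))"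
proof -
  have "poly_op (pCons c P) T x
      = (\<Sum>i\<le>Suc (degree P). complex_of_real (coeff (pCons c P) i) *\<^sub>H (T ^^ i) x)"
    by (rule poly_op_degree_le) (simp add: degree_pCons_le)
  also have "\<dots> = complex_of_real c *\<^sub>H x
      + (\<Sum>i\<le>degree P. complex_of_real (coeff P i) *\<^sub>H (T ^^ Suc i) x)"
    by (subst sum.atMost_Suc_shift) simp
  also have "(\<Sum>i\<le>degree P. complex_of_real (coeff P i) *\<^sub>H (T ^^ Suc i) x) = T (poly_op P T x)"
    by (simp add: poly_op_def bounded_op_sum[OF assms] bounded_op_scale[OF assms])
  finally show ?thesis .
qed

lemma poly_op_X: "bounded_op T \<Longrightarrow> poly_op [:0, 1:] T x = T (x::'a::chilbert)"
  using poly_op_pCons[of T 0 1 x] poly_op_const[of 1 T x] by (simp add: one_pCons hscale_one)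

lemma bounded_op_poly_op: "bounded_op T \<Longrightarrow> bounded_op (poly_op P (T::'a::chilbert \<Rightarrow> 'a))"
  unfolding poly_op_def
  by (intro bounded_op_sum_op bounded_op_scale_op bounded_op_funpow)

lemma poly_op_mult:
  assumes "bounded_op T"
  shows "poly_op (P * Q) T x = poly_op P T (poly_op Q T (x::'a::chilbert))"
proof (induct P arbitrary: x rule: pCons_induct)
  case (pCons a p)
  have "pCons a p * Q = smult a Q + pCons 0 (p * Q)" by simp
  then show ?case
    by (simp only: poly_op_add poly_op_smult poly_op_pCons[OF assms] pCons.hyps
        of_real_0 hscale_zero_left add_0_left)
qed simp

lemma poly_op_pcompose:
  assumes "bounded_op T"
  shows "poly_op (pcompose P Q) T x = poly_op P (poly_op Q T) (x::'a::chilbert)"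
proof (induct P arbitrary: x rule: pCons_induct)
  case (pCons a p)
  show ?case
    by (simp add: pcompose_pCons poly_op_add poly_op_const poly_op_mult[OF assms]
        poly_op_pCons[OF bounded_op_poly_op[OF assms]] pCons.hyps)
qed simp

lemma selfadjoint_poly_op:
  assumes "selfadjoint T"
  shows "selfadjoint (poly_op P (T::'a::chilbert \<Rightarrow> 'a))"
  unfolding selfadjoint_def poly_op_def
  by (simp add: hinner_sum_left hinner_sum_right hinner_scale_left hinner_scale_right
      selfadjoint_funpow[OF assms])

section \<open>Polynomials nonnegative on an interval\<close>

definition cone_generator :: "real \<Rightarrow> real \<Rightarrow> nat \<Rightarrow> nat \<Rightarrow> real poly \<Rightarrow> real poly" where
  "cone_generator a b i j w = [:-a, 1:] ^ i * [:b, -1:] ^ j * w * w"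

inductive interval_cone :: "real \<Rightarrow> real \<Rightarrow> real poly \<Rightarrow> bool" for a b where
  interval_cone_zero: "interval_cone a b 0"
| interval_cone_step: "interval_cone a b p \<Longrightarrow> 0 \<le> c \<Longrightarrow>
    interval_cone a b (p + smult c (cone_generator a b i j w))"

lemma interval_cone_generator: "0 \<le> c \<Longrightarrow> interval_cone a b (smult c (cone_generator a b i j w))"
  using interval_cone_step[OF interval_cone_zero] by fastforce

lemma interval_cone_add:
  assumes "interval_cone a b q" "interval_cone a b p"
  shows "interval_cone a b (p + q)"
  using assms(1)
proof induct
  case (interval_cone_step q c i j w)
  then show ?case
    using interval_cone.interval_cone_step[of a b "p + q" c i j w] by (simp add: add.assoc)
qed (simp add: assms(2))

lemma cone_generator_mult:
  "cone_generator a b i j w * cone_generator a b i' j' w'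
    = cone_generator a b (i + i') (j + j') (w * w')"
  by (simp add: cone_generator_def power_add mult_ac)

lemma interval_cone_mult_generator:
  assumes "interval_cone a b q" "0 \<le> c"
  shows "interval_cone a b (smult c (cone_generator a b i j w) * q)"
  using assms(1)
proof induct
  case (interval_cone_step q c' i' j' w')
  have "smult c (cone_generator a b i j w) * (q + smult c' (cone_generator a b i' j' w'))
      = smult c (cone_generator a b i j w) * q
        + smult (c * c') (cone_generator a b (i + i') (j + j') (w * w'))"
    by (simp add: distrib_left cone_generator_mult[symmetric] mult_ac)
  then show ?case
    using interval_cone_step assms(2) by (simp add: interval_cone_add interval_cone_generator)
qed (simp add: interval_cone_zero)

lemma interval_cone_mult:
  assumes "interval_cone a b p" "interval_cone a b q"
  shows "interval_cone a b (p * q)"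
  using assms(1)
proof induct
  case (interval_cone_step p c i j w)
  then show ?case
    using interval_cone_mult_generator[OF assms(2)] by (simp add: distrib_right interval_cone_add)
qed (simp add: interval_cone_zero)

lemma interval_cone_const: "0 \<le> c \<Longrightarrow> interval_cone a b [:c:]"
  using interval_cone_generator[of c a b 0 0 1] by (simp add: cone_generator_def)

lemma interval_cone_square: "interval_cone a b (w * w)"
  using interval_cone_generator[of 1 a b 0 0 w] by (simp add: cone_generator_def)

lemma interval_cone_left_factor:
  assumes "r \<le> a"
  shows "interval_cone a b [:-r, 1:]"
proof -
  have "[:-r, 1:] = smult 1 (cone_generator a b 1 0 1) + smult (a - r) (cone_generator a b 0 0 1)"
    by (simp add: cone_generator_def)
  then show ?thesis
    using assms by (metis interval_cone_add interval_cone_generator diff_ge_0_iff_ge zero_le_one)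
qed

lemma interval_cone_right_factor:
  assumes "b \<le> r"
  shows "interval_cone a b [:r, -1:]"
proof -
  have "[:r, -1:] = smult 1 (cone_generator a b 0 1 1) + smult (r - b) (cone_generator a b 0 0 1)"
    by (simp add: cone_generator_def)
  then show ?thesis
    using assms by (metis interval_cone_add interval_cone_generator diff_ge_0_iff_ge zero_le_one)
qed

lemma interval_cone_quadratic: "interval_cone a b [:x^2 + y^2, -2 * x, 1:]"
proof -
  have "[:x^2 + y^2, -2 * x, 1:] = [:-x, 1:] * [:-x, 1:] + [:y^2:]"
    by (simp add: power2_eq_square)
  then show ?thesis by (metis interval_cone_add interval_cone_const interval_cone_square zero_le_power2)
qed

lemma interval_cone_degenerate:
  assumes "0 \<le> poly p a"
  shows "interval_cone a a p"
proof -
  obtain q where pq: "p - [:poly p a:] = [:-a, 1:] * q"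
    using poly_eq_0_iff_dvd[of "p - [:poly p a:]" a] by (auto simp: dvd_def)
  \<comment> \<open>\<open>(t - a) q = ((t - a) (q + 1)\<^sup>2 + (a - t) (q - 1)\<^sup>2) / 4\<close>\<close>
  have "p = [:poly p a:] + smult 1 (cone_generator a a 1 0 (smult (1/2) (q + 1)))
      + smult 1 (cone_generator a a 0 1 (smult (1/2) (q - 1)))"
  proof (rule poly_eq_poly_eq_iff[THEN iffD1, OF ext])
    fix t
    have "poly p t = poly p a + (t - a) * poly q t"
      using arg_cong[OF pq, of "\<lambda>r. poly r t"] by (simp add: algebra_simps)
    then show "poly p t = poly ([:poly p a:] + smult 1 (cone_generator a a 1 0 (smult (1/2) (q + 1)))
        + smult 1 (cone_generator a a 0 1 (smult (1/2) (q - 1)))) t"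
      by (simp add: cone_generator_def algebra_simps power2_eq_square)
  qed
  then show ?thesis
    using assms by (metis interval_cone_add interval_cone_const interval_cone_generator zero_le_one)
qed

lemma poly_nonneg_Icc_if_nonneg_Ioo:
  fixes s :: "real poly"
  assumes "u < v" "\<And>t. u < t \<Longrightarrow> t < v \<Longrightarrow> 0 \<le> poly s t" "u \<le> t" "t \<le> v"
  shows "0 \<le> poly s t"
proof (rule continuous_ge_on_closure[of "{u<..<v}" "poly s"])
  show "continuous_on (closure {u<..<v}) (poly s)" by (intro continuous_intros)
qed (use assms in auto)

lemma linear_quotient_sign:
  fixes p q :: "real poly"
  assumes "a < b" and p: "\<forall>t\<in>{a..b}. 0 \<le> poly p t" and pq: "p = [:-r, 1:] * q"
  shows linear_quotient_nonneg: "r \<le> a \<Longrightarrow> a \<le> t \<Longrightarrow> t \<le> b \<Longrightarrow> 0 \<le> poly q t"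
    and linear_quotient_nonpos: "b \<le> r \<Longrightarrow> a \<le> t \<Longrightarrow> t \<le> b \<Longrightarrow> 0 \<le> poly (- q) t"
    and linear_quotient_root: "a < r \<Longrightarrow> r < b \<Longrightarrow> poly q r = 0"
proof -
  have pt: "poly p t = (t - r) * poly q t" for t by (simp add: pq algebra_simps)
  have right: "0 \<le> poly q t" if "a \<le> u" "r \<le> u" "u < v" "v \<le> b" "u \<le> t" "t \<le> v" for u v t
    using \<open>u < v\<close> _ \<open>u \<le> t\<close> \<open>t \<le> v\<close>
  proof (rule poly_nonneg_Icc_if_nonneg_Ioo)
    fix s assume "u < s" "s < v"
    then have "0 \<le> (s - r) * poly q s" "0 < s - r" using bspec[OF p, of s] pt[of s] that by auto
    then show "0 \<le> poly q s" by (simp add: zero_le_mult_iff)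
  qed
  have left: "0 \<le> poly (- q) t" if "a \<le> u" "u < v" "v \<le> r" "v \<le> b" "u \<le> t" "t \<le> v" for u v t
    using \<open>u < v\<close> _ \<open>u \<le> t\<close> \<open>t \<le> v\<close>
  proof (rule poly_nonneg_Icc_if_nonneg_Ioo)
    fix s assume "u < s" "s < v"
    then have "0 \<le> (s - r) * poly q s" "s - r < 0" using bspec[OF p, of s] pt[of s] that by auto
    then show "0 \<le> poly (- q) s" by (simp add: zero_le_mult_iff)
  qed
  show "r \<le> a \<Longrightarrow> a \<le> t \<Longrightarrow> t \<le> b \<Longrightarrow> 0 \<le> poly q t" using right[of a b t] assms(1) by simp
  show "b \<le> r \<Longrightarrow> a \<le> t \<Longrightarrow> t \<le> b \<Longrightarrow> 0 \<le> poly (- q) t" using left[of a b t] assms(1) by simp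
  show "a < r \<Longrightarrow> r < b \<Longrightarrow> poly q r = 0" using right[of r b r] left[of a r r] by simp
qed

lemma poly_map_of_real_add:
  "poly (map_poly complex_of_real (p + q)) z
    = poly (map_poly complex_of_real p) z + poly (map_poly complex_of_real q) z"
proof -
  have "map_poly complex_of_real (p + q) = map_poly of_real p + map_poly of_real q"
    by (intro poly_eqI) (simp add: coeff_map_poly)
  then show ?thesis by simp
qed

lemma poly_map_of_real_mult:
  "poly (map_poly complex_of_real (p * q)) z
    = poly (map_poly complex_of_real p) z * poly (map_poly complex_of_real q) z"
proof (induct p rule: pCons_induct)
  case (pCons a p)
  show ?case
    using pCons.hyps poly_map_of_real_add[of "smult a q" "pCons 0 (p * q)" z]
    by (simp add: map_poly_smult map_poly_pCons algebra_simps)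
qed simp

lemma poly_map_of_real_of_real:
  "poly (map_poly complex_of_real p) (complex_of_real t) = complex_of_real (poly p t)"
  by (induct p) (simp_all add: map_poly_pCons)

text \<open>A non-real root z of a real polynomial is shared with the real quadratic
  \<open>(t - Re z)\<^sup>2 + (Im z)\<^sup>2\<close>; the remainder by that quadratic is real, has degree at most 1
  and vanishes at z, hence is 0.\<close>
lemma real_poly_nonreal_root_factor:
  fixes p :: "real poly"
  assumes z: "poly (map_poly complex_of_real p) z = 0" and y: "Im z \<noteq> 0"
  shows "[:Re z ^ 2 + Im z ^ 2, -2 * Re z, 1:] dvd p"
proof -
  define Q where "Q = [:Re z ^ 2 + Im z ^ 2, -2 * Re z, 1:]"
  define rr where "rr = p mod Q"
  have Qz: "poly (map_poly complex_of_real Q) z = 0"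
    by (simp add: Q_def map_poly_pCons complex_eq_iff power2_eq_square algebra_simps)
  have "p = Q * (p div Q) + rr" by (simp add: rr_def)
  then have rrz: "poly (map_poly complex_of_real rr) z = 0"
    using z Qz by (metis poly_map_of_real_add poly_map_of_real_mult add_0 mult_zero_left)
  have "degree rr \<le> 1"
    using degree_mod_less[of Q p] by (fastforce simp: rr_def Q_def)
  then have rr: "rr = [:coeff rr 0, coeff rr 1:]"
    by (intro poly_eqI) (auto simp: coeff_pCons coeff_eq_0 split: nat.splits)
  have "complex_of_real (coeff rr 0) + z * complex_of_real (coeff rr 1) = 0"
    using rrz by (subst (asm) rr) (simp add: map_poly_pCons)
  then have "coeff rr 1 * Im z = 0" "coeff rr 0 + Re z * coeff rr 1 = 0"
    by (simp_all add: complex_eq_iff mult.commute)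
  then have "rr = 0" using y by (subst rr) simp
  then show ?thesis by (simp add: rr_def Q_def mod_eq_0_iff_dvd)
qed

lemma real_poly_has_complex_root:
  fixes p :: "real poly"
  assumes "degree p > 0"
  obtains z where "poly (map_poly complex_of_real p) z = 0"
proof -
  have "degree (map_poly complex_of_real p) = degree p" by (rule degree_map_poly) simp
  then have "\<not> constant (poly (map_poly complex_of_real p))"
    using assms constant_degree[of "map_poly complex_of_real p"] by simp
  then show ?thesis using fundamental_theorem_of_algebra that by blast
qed

lemma real_root_cone_factor:
  fixes p :: "real poly"
  assumes ab: "a < b" and p: "\<forall>t\<in>{a..b}. 0 \<le> poly p t" and r: "poly p r = 0"
  obtains d s where "p = d * s" "degree d > 0" "interval_cone a b d" "\<forall>t\<in>{a..b}. 0 \<le> poly s t"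
proof -
  obtain q where pq: "p = [:-r, 1:] * q" using r by (metis dvdE poly_eq_0_iff_dvd)
  note sign = linear_quotient_sign[OF ab p pq]
  consider "r \<le> a" | "b \<le> r" | "a < r" "r < b" by linarith
  then show ?thesis
  proof cases
    case 1
    then show ?thesis by (intro that[OF pq]) (use interval_cone_left_factor sign(1) in auto)
  next
    case 2
    have "p = [:r, -1:] * (- q)" by (simp add: pq)
    then show ?thesis
      by (rule that) (use interval_cone_right_factor[OF 2] sign(2)[OF 2] in auto)
  next
    case 3
    then obtain s where "q = [:-r, 1:] * s" using sign(3) by (metis dvdE poly_eq_0_iff_dvd)
    then have ps: "p = ([:-r, 1:] * [:-r, 1:]) * s" by (simp only: pq mult.assoc)
    have "0 \<le> poly s t" if "a \<le> t" "t \<le> b" "t \<noteq> r" for t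
    proof -
      have "0 \<le> poly p t" using p that(1,2) by simp
      then have "0 \<le> (t - r)\<^sup>2 * poly s t" by (simp add: ps power2_eq_square algebra_simps)
      moreover have "0 < (t - r)\<^sup>2" using that(3) by simp
      ultimately show ?thesis by (simp add: zero_le_mult_iff)
    qed
    moreover have "0 \<le> poly s r"
      by (rule poly_nonneg_Icc_if_nonneg_Ioo[of r b]) (use 3 calculation in auto)
    ultimately show ?thesis
      using that[OF ps] interval_cone_square by fastforce
  qed
qed

lemma nonreal_root_cone_factor:
  fixes p :: "real poly"
  assumes p: "\<forall>t\<in>{a..b}. 0 \<le> poly p t"
    and z: "poly (map_poly complex_of_real p) z = 0" "Im z \<noteq> 0"
  obtains d s where "p = d * s" "degree d > 0" "interval_cone a b d" "\<forall>t\<in>{a..b}. 0 \<le> poly s t"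
proof -
  define Q where "Q = [:Re z ^ 2 + Im z ^ 2, -2 * Re z, 1:]"
  obtain s where ps: "p = Q * s"
    using real_poly_nonreal_root_factor[OF z] by (auto simp: Q_def)
  have "poly Q t = (t - Re z)\<^sup>2 + (Im z)\<^sup>2" for t
    by (simp add: Q_def algebra_simps power2_eq_square)
  then have "poly Q t > 0" for t using z(2) by (simp add: add_nonneg_pos)
  then have "\<forall>t\<in>{a..b}. 0 \<le> poly s t" using p by (simp add: ps zero_le_mult_iff) (meson not_le)
  then show ?thesis using that[OF ps] interval_cone_quadratic by (simp add: Q_def)
qed

lemma nonneg_cone_factor:
  fixes p :: "real poly"
  assumes "a < b" "\<forall>t\<in>{a..b}. 0 \<le> poly p t" "degree p > 0"
  obtains d s where "p = d * s" "degree s < degree p" "interval_cone a b d"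
    "\<forall>t\<in>{a..b}. 0 \<le> poly s t"
proof -
  have deg_less: "degree s < degree p" if "p = d * s" "degree d > 0" for d s
    using that assms(3) by (cases "s = 0"; cases "d = 0") (auto simp: degree_mult_eq)
  obtain z where z: "poly (map_poly complex_of_real p) z = 0"
    using real_poly_has_complex_root assms(3) by blast
  show ?thesis
  proof (cases "Im z = 0")
    case True
    then have "z = complex_of_real (Re z)" by (simp add: complex_eq_iff)
    then have "poly p (Re z) = 0" using z poly_map_of_real_of_real[of p "Re z"] by simp
    then show ?thesis using real_root_cone_factor[OF assms(1,2)] that deg_less by metis
  next
    case False
    then show ?thesis using nonreal_root_cone_factor[OF assms(2) z] that deg_less by metis
  qed
qed

lemma interval_cone_of_nonneg_proper:
  assumes "a < b" "\<forall>t\<in>{a..b}. 0 \<le> poly p t"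
  shows "interval_cone a b p"
  using assms(2)
proof (induct "degree p" arbitrary: p rule: less_induct)
  case less
  show ?case
  proof (cases "degree p = 0")
    case True
    then have p: "p = [:coeff p 0:]" by (simp add: degree_0_id)
    have "poly p a = coeff p 0" by (subst p) simp
    then have "0 \<le> coeff p 0" using bspec[OF less.prems, of a] assms(1) by simp
    then show ?thesis by (subst p) (rule interval_cone_const)
  next
    case False
    then obtain d s where "p = d * s" "degree s < degree p" "interval_cone a b d"
      "\<forall>t\<in>{a..b}. 0 \<le> poly s t"
      using nonneg_cone_factor[OF assms(1) less.prems] by blast
    then show ?thesis using less.hyps interval_cone_mult by metis
  qed
qed

lemma interval_cone_of_nonneg:
  assumes "a \<le> b" "\<And>t. a \<le> t \<Longrightarrow> t \<le> b \<Longrightarrow> 0 \<le> poly p t"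
  shows "interval_cone a b p"
  using assms interval_cone_degenerate interval_cone_of_nonneg_proper
  by (cases "a = b") auto

section \<open>Positivity of the polynomial calculus\<close>

text \<open>This is \<open>Y\<^sup>2 \<le> c Y\<close> for \<open>0 \<le> Y \<le> c\<close>; it is read off from the nonnegativity of the
  quadratic form of Y at \<open>x - s Yx\<close> as a polynomial in s.\<close>
lemma hnorm_sq_le_qform:
  fixes Y :: "'a::chilbert \<Rightarrow> 'a"
  assumes bY: "bounded_op Y" and sY: "selfadjoint Y" and pY: "positive_op Y"
    and Yc: "\<And>v. Re (hinner v (Y v)) \<le> c * hnorm v ^ 2"
  shows "hnorm (Y x) ^ 2 \<le> c * Re (hinner x (Y x))"
proof -
  define u where "u = Y x"
  have key: "0 \<le> Re (hinner x u) - 2 * s * hnorm u ^ 2 + s^2 * Re (hinner u (Y u))" for s :: real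
  proof -
    have "hinner x (Y u) = hinner u u" using sY by (simp add: selfadjoint_def u_def)
    then have "Re (hinner (x - complex_of_real s *\<^sub>H u) (Y (x - complex_of_real s *\<^sub>H u)))
        = Re (hinner x u) - 2 * s * hnorm u ^ 2 + s^2 * Re (hinner u (Y u))"
      by (simp add: bounded_op_diff[OF bY] bounded_op_scale[OF bY] hinner_simps u_def[symmetric]
          hinner_self_hnorm power2_eq_square algebra_simps)
    then show ?thesis using pY by (metis positive_op_def)
  qed
  show ?thesis
  proof (cases "c \<le> 0")
    case True
    have "hnorm u ^ 2 \<le> 0"
    proof (rule ccontr)
      assume hu: "\<not> hnorm u ^ 2 \<le> 0"
      have "2 * ((Re (hinner x u) + 1) / (2 * hnorm u ^ 2)) * hnorm u ^ 2 = Re (hinner x u) + 1"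
        using hu by simp
      then show False
        using key[of "(Re (hinner x u) + 1) / (2 * hnorm u ^ 2)"] Yc[of u] True
        by (smt (verit) zero_le_power2 mult_nonneg_nonpos mult_nonpos_nonneg)
    qed
    moreover have "Re (hinner x u) = 0"
      using Yc[of x] pY True by (smt (verit) mult_nonpos_nonneg positive_op_def u_def zero_le_power2)
    ultimately show ?thesis by (simp add: u_def)
  next
    case False
    then have cp: "c > 0" by simp
    have "0 \<le> Re (hinner x u) - 2 * (1/c) * hnorm u ^ 2 + (1/c)^2 * (c * hnorm u ^ 2)"
      using key[of "1/c"] Yc[of u] by (smt (verit) mult_left_mono zero_le_power2)
    then show ?thesis using cp by (simp add: u_def power2_eq_square field_simps)
  qed
qed

context
  fixes T :: "'a::chilbert \<Rightarrow> 'a"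
  assumes bT: "bounded_op T" and sT: "selfadjoint T"
begin

lemma poly_op_linear: "poly_op [:c, d:] T x = complex_of_real c *\<^sub>H x + complex_of_real d *\<^sub>H T x"
  by (simp add: poly_op_pCons[OF bT] poly_op_const bounded_op_scale[OF bT] bounded_op_zero[OF bT])

lemma qform_poly_op_linear:
  "Re (hinner x (poly_op [:c, d:] T x)) = c * hnorm x ^ 2 + d * Re (hinner x (T x))"
  by (simp add: poly_op_linear hinner_add_right hinner_scale_right hinner_self_hnorm)

lemma positive_op_sub_spec_lo: "positive_op (poly_op [:- spec_lo T, 1:] T)"
  unfolding positive_op_def qform_poly_op_linear using spec_lo_le_qform[OF bT] by simp

lemma positive_op_spec_hi_sub: "positive_op (poly_op [:spec_hi T, -1:] T)"
  unfolding positive_op_def qform_poly_op_linear using qform_le_spec_hi[OF bT] by simp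

lemma positive_op_spectral_product: "positive_op (poly_op ([:- spec_lo T, 1:] * [:spec_hi T, -1:]) T)"
  unfolding positive_op_def
proof
  fix x
  define Y where "Y = poly_op [:- spec_lo T, 1:] T"
  define c where "c = spec_hi T - spec_lo T"
  have "Re (hinner v (Y v)) \<le> c * hnorm v ^ 2" for v
    using qform_le_spec_hi[OF bT, of v]
    by (simp add: Y_def qform_poly_op_linear c_def algebra_simps)
  then have "hnorm (Y x) ^ 2 \<le> c * Re (hinner x (Y x))"
    using hnorm_sq_le_qform[of Y] positive_op_sub_spec_lo bounded_op_poly_op[OF bT]
      selfadjoint_poly_op[OF sT] by (auto simp: Y_def)
  moreover have "[:- spec_lo T, 1:] * [:spec_hi T, -1:]
      = smult c [:- spec_lo T, 1:] - [:- spec_lo T, 1:] * [:- spec_lo T, 1:]"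
    by (simp add: c_def algebra_simps)
  then have "poly_op ([:- spec_lo T, 1:] * [:spec_hi T, -1:]) T x
      = complex_of_real c *\<^sub>H Y x - Y (Y x)"
    by (simp only: poly_op_diff poly_op_smult poly_op_mult[OF bT] Y_def)
  then have "Re (hinner x (poly_op ([:- spec_lo T, 1:] * [:spec_hi T, -1:]) T x))
      = c * Re (hinner x (Y x)) - hnorm (Y x) ^ 2"
    using selfadjoint_poly_op[OF sT]
    by (simp add: Y_def hinner_diff_right hinner_scale_right selfadjoint_def hnorm_sq)
  ultimately show "0 \<le> Re (hinner x (poly_op ([:- spec_lo T, 1:] * [:spec_hi T, -1:]) T x))"
    by simp
qed

lemma positive_op_poly_sandwich:
  assumes "positive_op (poly_op E T)"
  shows "positive_op (poly_op (E * W * W) T)"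
  unfolding positive_op_def
proof
  fix x
  have "poly_op (E * W * W) T x = poly_op W T (poly_op E T (poly_op W T x))"
    by (metis mult.commute mult.assoc poly_op_mult[OF bT])
  then have "hinner x (poly_op (E * W * W) T x)
      = hinner (poly_op W T x) (poly_op E T (poly_op W T x))"
    using selfadjoint_poly_op[OF sT, of W] by (simp add: selfadjoint_def)
  then show "0 \<le> Re (hinner x (poly_op (E * W * W) T x))"
    using assms by (simp add: positive_op_def)
qed

lemma positive_op_cone_generator:
  "positive_op (poly_op (cone_generator (spec_lo T) (spec_hi T) i j w) T)"
proof -
  define L where "L = [:- spec_lo T, 1:]"
  define R where "R = [:spec_hi T, -1:]"
  have split: "x ^ n = x ^ (n mod 2) * x ^ (n div 2) * x ^ (n div 2)" for x :: "real poly" and n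
    by (metis mod_mult_div_eq mult_2 power_add mult.assoc)
  define W where "W = w * L ^ (i div 2) * R ^ (j div 2)"
  have "cone_generator (spec_lo T) (spec_hi T) i j w = L ^ (i mod 2) * R ^ (j mod 2) * W * W"
    unfolding cone_generator_def L_def[symmetric] R_def[symmetric] W_def
    by (subst split[of L i], subst split[of R j]) (simp add: mult_ac)
  moreover have "positive_op (poly_op (L ^ (i mod 2) * R ^ (j mod 2)) T)"
  proof -
    have "i mod 2 = 0 \<or> i mod 2 = 1" "j mod 2 = 0 \<or> j mod 2 = 1" by auto
    moreover have "positive_op (poly_op 1 T)"
      by (simp add: positive_op_def poly_op_one hinner_self_hnorm)
    ultimately show ?thesis
      using positive_op_sub_spec_lo positive_op_spec_hi_sub positive_op_spectral_product
      by (auto simp: L_def R_def)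
  qed
  ultimately show ?thesis using positive_op_poly_sandwich by simp
qed

lemma positive_op_of_interval_cone:
  "interval_cone (spec_lo T) (spec_hi T) P \<Longrightarrow> positive_op (poly_op P T)"
proof (induct P rule: interval_cone.induct)
  case (interval_cone_step p c i j w)
  have "poly_op (p + smult c (cone_generator (spec_lo T) (spec_hi T) i j w)) T
      = (\<lambda>x. poly_op p T x
           + complex_of_real c *\<^sub>H poly_op (cone_generator (spec_lo T) (spec_hi T) i j w) T x)"
    by (simp add: poly_op_add poly_op_smult fun_eq_iff)
  then show ?case
    using interval_cone_step positive_op_cone_generator
    by (simp add: positive_op_add positive_op_scale)
qed (simp add: positive_op_def)

lemma positive_op_poly_op:
  "(\<And>t. spec_lo T \<le> t \<Longrightarrow> t \<le> spec_hi T \<Longrightarrow> 0 \<le> poly P t) \<Longrightarrow> positive_op (poly_op P T)"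
  using positive_op_of_interval_cone interval_cone_of_nonneg spec_lo_le_spec_hi[OF bT] by blast

text \<open>Positivity of \<open>M\<^sup>2 - P(T)\<^sup>2\<close> gives \<open>\<parallel>P(T)x\<parallel>\<^sup>2 \<le> M\<^sup>2 \<parallel>x\<parallel>\<^sup>2\<close>.\<close>
lemma opnorm_poly_op_le:
  assumes "\<And>t. spec_lo T \<le> t \<Longrightarrow> t \<le> spec_hi T \<Longrightarrow> \<bar>poly P t\<bar> \<le> M"
  shows "opnorm (poly_op P T) \<le> M"
proof (rule opnorm_leI)
  show M0: "0 \<le> M"
    using assms[of 0] spec_lo_le_0[OF bT] spec_hi_ge_0[OF bT] by auto
  fix x
  have "positive_op (poly_op ([:M^2:] - P * P) T)"
  proof (rule positive_op_poly_op)
    fix t assume "spec_lo T \<le> t" "t \<le> spec_hi T"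
    then have "(poly P t)^2 \<le> M^2" using assms by (metis abs_ge_zero power2_abs power_mono)
    then show "0 \<le> poly ([:M^2:] - P * P) t" by (simp add: power2_eq_square)
  qed
  moreover have "hinner x (poly_op P T (poly_op P T x)) = hinner (poly_op P T x) (poly_op P T x)"
    using selfadjoint_poly_op[OF sT, of P] by (simp add: selfadjoint_def)
  then have "Re (hinner x (poly_op ([:M^2:] - P * P) T x))
      = M^2 * hnorm x ^ 2 - hnorm (poly_op P T x) ^ 2"
    by (simp add: poly_op_diff poly_op_const poly_op_mult[OF bT] hinner_diff_right
        hinner_scale_right hinner_self_hnorm)
  ultimately have "hnorm (poly_op P T x) ^ 2 \<le> (M * hnorm x) ^ 2"
    unfolding positive_op_def power_mult_distrib by (metis diff_ge_0_iff_ge)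
  then show "hnorm (poly_op P T x) \<le> M * hnorm x"
    using M0 by (meson hnorm_nonneg mult_nonneg_nonneg power2_le_imp_le)
qed

lemma opnorm_poly_op_diff_le:
  assumes "\<And>t. t \<in> {spec_lo T..spec_hi T} \<Longrightarrow> \<bar>poly P t - poly Q t\<bar> \<le> M"
  shows "opnorm (\<lambda>x. poly_op P T x - poly_op Q T x) \<le> M"
proof -
  have "(\<lambda>x. poly_op P T x - poly_op Q T x) = poly_op (P - Q) T" by (simp add: poly_op_diff fun_eq_iff)
  then show ?thesis using assms by (simp add: opnorm_poly_op_le)
qed

end

lemma nonneg_LIMSEQ_0I:
  assumes "\<And>n. 0 \<le> f n" "\<And>e. e > 0 \<Longrightarrow> \<exists>N. \<forall>n\<ge>N. f n \<le> e"
  shows "f \<longlonglongrightarrow> (0::real)"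
proof (rule LIMSEQ_I)
  fix r :: real assume "0 < r"
  then obtain N where "\<forall>n\<ge>N. f n \<le> r / 2" using assms(2)[of "r/2"] by auto
  then show "\<exists>N. \<forall>n\<ge>N. norm (f n - 0) < r" using assms(1) \<open>0 < r\<close> by force
qed

lemma LIMSEQ_0_eventually_less:
  "f \<longlonglongrightarrow> (0::real) \<Longrightarrow> e > 0 \<Longrightarrow> \<exists>N. \<forall>n\<ge>N. f n < e"
  using LIMSEQ_D by (metis abs_less_iff diff_zero real_norm_def)

definition hlim :: "(nat \<Rightarrow> 'a::chilbert) \<Rightarrow> 'a \<Rightarrow> bool" where
  "hlim X L \<longleftrightarrow> (\<lambda>n. hnorm (X n - L)) \<longlonglongrightarrow> 0"

lemma hlimD: "hlim X L \<Longrightarrow> e > 0 \<Longrightarrow> \<exists>N. \<forall>n\<ge>N. hnorm (X n - L) < e"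
  unfolding hlim_def by (rule LIMSEQ_0_eventually_less)

lemma hlimI: "(\<And>e. e > 0 \<Longrightarrow> \<exists>N. \<forall>n\<ge>N. hnorm (X n - L) \<le> e) \<Longrightarrow> hlim X L"
  unfolding hlim_def by (rule nonneg_LIMSEQ_0I) auto

lemma hlim_const: "hlim (\<lambda>n. a) a"
  by (rule hlimI) auto

lemma hlim_unique:
  assumes "hlim X L1" "hlim X L2"
  shows "L1 = L2"
proof -
  have "(\<lambda>n. hnorm (X n - L1) + hnorm (X n - L2)) \<longlonglongrightarrow> 0 + 0"
    using assms unfolding hlim_def by (rule tendsto_add)
  moreover have "hnorm (L1 - L2) \<le> hnorm (X n - L1) + hnorm (X n - L2)" for n
    using hnorm_triangle_diff[of L1 L2 "X n"] hnorm_diff_commute[of L1 "X n"] by linarith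
  ultimately have "hnorm (L1 - L2) \<le> 0"
    by (intro LIMSEQ_le_const[where X="\<lambda>n. hnorm (X n - L1) + hnorm (X n - L2)"]) auto
  then show ?thesis using hnorm_nonneg[of "L1 - L2"] by simp
qed

lemma hlim_add:
  assumes "hlim X a" "hlim Y b"
  shows "hlim (\<lambda>n. X n + Y n) (a + b)"
  unfolding hlim_def
proof (rule Lim_null_comparison)
  show "\<forall>\<^sub>F n in sequentially. norm (hnorm (X n + Y n - (a + b))) \<le> hnorm (X n - a) + hnorm (Y n - b)"
    using hnorm_triangle_ineq[of "X _ - a" "Y _ - b"] by (simp add: algebra_simps)
  show "(\<lambda>n. hnorm (X n - a) + hnorm (Y n - b)) \<longlonglongrightarrow> 0"
    using tendsto_add[OF assms[unfolded hlim_def]] by simp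
qed

lemma hlim_bounded_op:
  assumes "bounded_op S" "hlim X a"
  shows "hlim (\<lambda>n. S (X n)) (S a)"
  unfolding hlim_def
proof (rule Lim_null_comparison)
  show "\<forall>\<^sub>F n in sequentially. norm (hnorm (S (X n) - S a)) \<le> opnorm S * hnorm (X n - a)"
    using hnorm_le_opnorm[OF assms(1)] by (simp add: bounded_op_diff[OF assms(1), symmetric])
  show "(\<lambda>n. opnorm S * hnorm (X n - a)) \<longlonglongrightarrow> 0"
    using assms(2) unfolding hlim_def by (rule tendsto_mult_right_zero)
qed

lemma hlim_hinner_left:
  assumes "hlim X a"
  shows "(\<lambda>n. hinner (X n) y) \<longlonglongrightarrow> hinner a y"
proof -
  have "(\<lambda>n. hinner (X n) y - hinner a y) \<longlonglongrightarrow> 0"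
  proof (rule Lim_null_comparison)
    show "\<forall>\<^sub>F n in sequentially. norm (hinner (X n) y - hinner a y) \<le> hnorm (X n - a) * hnorm y"
      using hnorm_cauchy_schwarz[of "X _ - a" y] by (simp add: hinner_diff_left)
    show "(\<lambda>n. hnorm (X n - a) * hnorm y) \<longlonglongrightarrow> 0"
      using assms unfolding hlim_def by (rule tendsto_mult_left_zero)
  qed
  then show ?thesis by (rule LIM_zero_cancel)
qed

lemma hlim_hinner_right:
  assumes "hlim X a"
  shows "(\<lambda>n. hinner y (X n)) \<longlonglongrightarrow> hinner y a"
proof -
  have "(\<lambda>n. cnj (hinner (X n) y)) \<longlonglongrightarrow> cnj (hinner a y)"
    using hlim_hinner_left[OF assms] by (rule tendsto_cnj)
  moreover have "(\<lambda>n. hinner y (X n)) = (\<lambda>n. cnj (hinner (X n) y))"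
    by (simp add: hinner_commute[of y])
  ultimately show ?thesis by (simp add: hinner_commute[of y])
qed

lemma hnorm_diff_hlim_le:
  assumes "hlim X L" "\<And>m. m \<ge> N \<Longrightarrow> hnorm (a - X m) \<le> e"
  shows "hnorm (a - L) \<le> e"
proof -
  have "(\<lambda>m. e + hnorm (X m - L)) \<longlonglongrightarrow> e + 0"
    using assms(1) unfolding hlim_def by (intro tendsto_intros)
  moreover have "\<exists>N. \<forall>m\<ge>N. hnorm (a - L) \<le> e + hnorm (X m - L)"
    using hnorm_triangle_diff[of a L "X _"] assms(2) by (metis add_right_mono order_trans)
  ultimately show ?thesis using LIMSEQ_le_const by fastforce
qed

lemma hlim_of_cauchy:
  fixes X :: "nat \<Rightarrow> 'a::chilbert"
  assumes "\<And>e. e > 0 \<Longrightarrow> \<exists>N. \<forall>m\<ge>N. \<forall>n\<ge>N. hnorm (X m - X n) < e"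
  obtains L where "hlim X L"
  using hcomplete[of X] assms that unfolding hlim_def hnorm_def by blast

lemma hnorm_diff_le_of_opnorm_cauchy:
  assumes b: "\<And>n. bounded_op (X n :: 'a::chilbert \<Rightarrow> 'a)"
    and "\<forall>m\<ge>N. \<forall>n\<ge>N. opnorm (\<lambda>x. X m x - X n x) \<le> e" "m \<ge> N" "n \<ge> N"
  shows "hnorm (X m x - X n x) \<le> e * hnorm x"
  using hnorm_le_opnorm[OF bounded_op_diff_op[OF b[of m] b[of n]], of x] assms(2-4)
  by (meson hnorm_nonneg mult_right_mono order_trans)

lemma opnorm_cauchy_pointwise_limit:
  fixes X :: "nat \<Rightarrow> 'a::chilbert \<Rightarrow> 'a"
  assumes b: "\<And>n. bounded_op (X n)"
    and cauchy: "\<And>e. e > 0 \<Longrightarrow> \<exists>N. \<forall>m\<ge>N. \<forall>n\<ge>N. opnorm (\<lambda>x. X m x - X n x) \<le> e"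
  obtains S where "\<And>x. hlim (\<lambda>n. X n x) (S x)"
proof -
  have "\<exists>L. hlim (\<lambda>n. X n x) L" for x
  proof (rule hlim_of_cauchy)
    fix e :: real assume "e > 0"
    then obtain N where N: "\<forall>m\<ge>N. \<forall>n\<ge>N. opnorm (\<lambda>x. X m x - X n x) \<le> e / (hnorm x + 1)"
      using cauchy[of "e / (hnorm x + 1)"] by (auto simp: add_nonneg_pos)
    have "e / (hnorm x + 1) * hnorm x < e / (hnorm x + 1) * (hnorm x + 1)"
      using \<open>e > 0\<close> by (intro mult_strict_left_mono) (auto simp: add_nonneg_pos)
    then have "e / (hnorm x + 1) * hnorm x < e"
      by (metis hnorm_nonneg add_nonneg_pos zero_less_one nonzero_eq_divide_eq order_less_irrefl)
    then have "hnorm (X m x - X n x) < e" if "m \<ge> N" "n \<ge> N" for m n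
      using hnorm_diff_le_of_opnorm_cauchy[OF b N that, of x] by linarith
    then show "\<exists>N. \<forall>m\<ge>N. \<forall>n\<ge>N. hnorm (X m x - X n x) < e" by blast
  qed blast
  then show ?thesis using that by metis
qed

lemma bounded_op_complete:
  fixes X :: "nat \<Rightarrow> 'a::chilbert \<Rightarrow> 'a"
  assumes b: "\<And>n. bounded_op (X n)"
    and cauchy: "\<And>e. e > 0 \<Longrightarrow> \<exists>N. \<forall>m\<ge>N. \<forall>n\<ge>N. opnorm (\<lambda>x. X m x - X n x) \<le> e"
  obtains S where "bounded_op S" "(\<lambda>n. opnorm (\<lambda>x. X n x - S x)) \<longlonglongrightarrow> 0"
proof -
  obtain S where S: "\<And>x. hlim (\<lambda>n. X n x) (S x)"
    using opnorm_cauchy_pointwise_limit[OF b cauchy] by blast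
  have unif: "hnorm (X n x - S x) \<le> e * hnorm x"
    if "\<forall>m\<ge>N. \<forall>n\<ge>N. opnorm (\<lambda>x. X m x - X n x) \<le> e" "n \<ge> N" for N n e x
    using hnorm_diff_hlim_le[OF S, of N] hnorm_diff_le_of_opnorm_cauchy[OF b that(1) that(2)] by blast
  have "S (x + y) = S x + S y" for x y
    using hlim_add[OF S[of x] S[of y]] S[of "x + y"] hlim_unique by (simp add: bounded_op_add[OF b])
  moreover have "S (a *\<^sub>H x) = a *\<^sub>H S x" for a x
    using hlim_bounded_op[OF bounded_op_scale_op[OF bounded_op_ident, of a] S[of x]]
      S[of "a *\<^sub>H x"] hlim_unique by (simp add: bounded_op_scale[OF b])
  moreover obtain N1 where N1: "\<forall>m\<ge>N1. \<forall>n\<ge>N1. opnorm (\<lambda>x. X m x - X n x) \<le> 1"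
    using cauchy[of 1] by auto
  have "hnorm (S x) \<le> (opnorm (X N1) + 1) * hnorm x" for x
  proof -
    have "hnorm (S x) \<le> hnorm (X N1 x) + hnorm (X N1 x - S x)"
      using hnorm_diff_le[of "X N1 x" "X N1 x - S x"] by simp
    also have "\<dots> \<le> opnorm (X N1) * hnorm x + 1 * hnorm x"
      using hnorm_le_opnorm[OF b] unif[OF N1, of N1 x] by (intro add_mono) auto
    finally show ?thesis by (simp add: distrib_right)
  qed
  ultimately have bS: "bounded_op S" by (rule bounded_opI)
  have "(\<lambda>n. opnorm (\<lambda>x. X n x - S x)) \<longlonglongrightarrow> 0"
  proof (rule nonneg_LIMSEQ_0I)
    show "0 \<le> opnorm (\<lambda>x. X n x - S x)" for n by (simp add: bounded_op_diff_op b bS opnorm_nonneg)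
    fix e :: real assume "e > 0"
    then obtain N where N: "\<forall>m\<ge>N. \<forall>n\<ge>N. opnorm (\<lambda>x. X m x - X n x) \<le> e" using cauchy by blast
    have "opnorm (\<lambda>x. X n x - S x) \<le> e" if "n \<ge> N" for n
      by (rule opnorm_leI) (use \<open>e > 0\<close> unif[OF N that] in auto)
    then show "\<exists>N. \<forall>n\<ge>N. opnorm (\<lambda>x. X n x - S x) \<le> e" by blast
  qed
  then show ?thesis using bS that by blast
qed

lemma opnorm_limit_unique:
  assumes "bounded_op S" "bounded_op S'" "\<And>n. bounded_op (X n :: 'a::chilbert \<Rightarrow> 'a)"
    and "(\<lambda>n. opnorm (\<lambda>x. X n x - S x)) \<longlonglongrightarrow> 0" "(\<lambda>n. opnorm (\<lambda>x. X n x - S' x)) \<longlonglongrightarrow> 0"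
  shows "S' = S"
proof
  fix x
  have lim: "(\<lambda>n. opnorm (\<lambda>x. X n x - S' x) + opnorm (\<lambda>x. X n x - S x)) \<longlonglongrightarrow> 0 + 0"
    using assms(5,4) by (rule tendsto_add)
  have "opnorm (\<lambda>x. S' x - S x) \<le> opnorm (\<lambda>x. X n x - S' x) + opnorm (\<lambda>x. X n x - S x)" for n
    using opnorm_diff_triangle[OF assms(2) assms(3) assms(1)] by (simp add: opnorm_diff_commute[of S'])
  then have "opnorm (\<lambda>x. S' x - S x) \<le> 0 + 0" by (intro LIMSEQ_le_const[OF lim]) auto
  then show "S' x = S x" using opnorm_le_0_imp_zero[OF bounded_op_diff_op[OF assms(2,1)]] by simp
qed

section \<open>The continuous functional calculus\<close>

definition poly_unif_conv :: "(nat \<Rightarrow> real poly) \<Rightarrow> (real \<Rightarrow> real) \<Rightarrow> real set \<Rightarrow> bool" where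
  "poly_unif_conv P f I \<longleftrightarrow> (\<forall>e>0. \<exists>N. \<forall>n\<ge>N. \<forall>t\<in>I. \<bar>poly (P n) t - f t\<bar> < e)"

lemma fcalc_eq_The: "fcalc f T = (THE S. bounded_op S \<and>
     (\<forall>P. poly_unif_conv P f {spec_lo T..spec_hi T}
       \<longrightarrow> (\<lambda>n. opnorm (\<lambda>x. poly_op (P n) T x - S x)) \<longlonglongrightarrow> 0))"
  by (simp add: fcalc_def poly_unif_conv_def)

lemma poly_unif_conv_from_above:
  fixes f :: "real \<Rightarrow> real"
  assumes "compact I" "continuous_on I f"
  obtains P where "poly_unif_conv P f I" "\<And>n t. t \<in> I \<Longrightarrow> f t \<le> poly (P n) t"
proof -
  have "\<exists>Q. \<forall>t\<in>I. \<bar>f t - poly Q t\<bar> < 1 / (2 * (real n + 1))" for n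
  proof -
    have "0 < 1 / (2 * (real n + 1))" by simp
    then obtain g where g: "real_polynomial_function g"
      "\<And>t. t \<in> I \<Longrightarrow> \<bar>f t - g t\<bar> < 1 / (2 * (real n + 1))"
      using Stone_Weierstrass_real_polynomial_function[OF assms] by blast
    obtain a m where "g = (\<lambda>x. \<Sum>i\<le>m. a i * x^i)" using real_polynomial_function_imp_sum[OF g(1)] by blast
    then have "g t = poly (\<Sum>i\<le>m. monom (a i) i) t" for t by (simp add: poly_sum poly_monom)
    then show ?thesis using g(2) by metis
  qed
  then obtain Q where Q: "\<And>n t. t \<in> I \<Longrightarrow> \<bar>f t - poly (Q n) t\<bar> < 1 / (2 * (real n + 1))" by metis
  define P where "P n = Q n + [:1 / (2 * (real n + 1)):]" for n
  have err: "f t \<le> poly (P n) t \<and> \<bar>poly (P n) t - f t\<bar> < 1 / (real n + 1)" if "t \<in> I" for n t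
  proof -
    have "1 / (2 * (real n + 1)) + 1 / (2 * (real n + 1)) = 1 / (real n + 1)"
      by (simp add: field_simps)
    moreover have "poly (P n) t = poly (Q n) t + 1 / (2 * (real n + 1))" by (simp add: P_def)
    moreover have "0 < 1 / (2 * (real n + 1))" by simp
    moreover note Q[OF that, of n, unfolded abs_less_iff]
    ultimately show ?thesis unfolding abs_less_iff by (smt (verit))
  qed
  have "poly_unif_conv P f I" unfolding poly_unif_conv_def
  proof (intro allI impI)
    fix e :: real assume "e > 0"
    then obtain N where "inverse (real (Suc N)) < e" using reals_Archimedean by blast
    then have N: "1 / (real N + 1) < e" by (simp add: inverse_eq_divide add.commute)
    have "\<bar>poly (P n) t - f t\<bar> < e" if "n \<ge> N" "t \<in> I" for n t
    proof -
      have "1 / (real n + 1) \<le> 1 / (real N + 1)" using that by (simp add: frac_le)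
      then show ?thesis using err[OF that(2), of n] N by linarith
    qed
    then show "\<exists>N. \<forall>n\<ge>N. \<forall>t\<in>I. \<bar>poly (P n) t - f t\<bar> < e" by blast
  qed
  then show ?thesis using that err by blast
qed

lemma continuous_on_Icc_abs_bound:
  fixes f :: "real \<Rightarrow> real"
  assumes "continuous_on {a..b} f"
  obtains B where "B \<ge> 0" "\<And>t. t \<in> {a..b} \<Longrightarrow> \<bar>f t\<bar> \<le> B"
proof -
  have "bounded (f ` {a..b})" by (intro compact_imp_bounded compact_continuous_image assms compact_Icc)
  then obtain B where "\<forall>y\<in>f ` {a..b}. \<bar>y\<bar> \<le> B" by (auto simp: bounded_real)
  then have "\<bar>f t\<bar> \<le> max B 0" if "t \<in> {a..b}" for t using that by (metis image_eqI le_max_iff_disj)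
  then show ?thesis using that[of "max B 0"] by simp
qed

lemma poly_unif_conv_mult:
  assumes cf: "continuous_on {a..b} f" and cg: "continuous_on {a..b} g"
    and P: "poly_unif_conv P f {a..b}" and Q: "poly_unif_conv Q g {a..b}"
  shows "poly_unif_conv (\<lambda>n. P n * Q n) (\<lambda>t. f t * g t) {a..b}"
  unfolding poly_unif_conv_def
proof (intro allI impI)
  fix e :: real assume e: "e > 0"
  obtain Bf where Bf: "Bf \<ge> 0" "\<And>t. t \<in> {a..b} \<Longrightarrow> \<bar>f t\<bar> \<le> Bf"
    using continuous_on_Icc_abs_bound[OF cf] by blast
  obtain Bg where Bg: "Bg \<ge> 0" "\<And>t. t \<in> {a..b} \<Longrightarrow> \<bar>g t\<bar> \<le> Bg"
    using continuous_on_Icc_abs_bound[OF cg] by blast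
  define d where "d = min 1 (e / (Bf + Bg + 2))"
  have d: "d > 0" "d \<le> 1" "d * (Bf + Bg + 1) < e"
  proof -
    show "d > 0" "d \<le> 1" using e Bf Bg by (auto simp: d_def)
    have "d * (Bf + Bg + 1) \<le> e / (Bf + Bg + 2) * (Bf + Bg + 1)"
      using Bf Bg by (intro mult_right_mono) (auto simp: d_def)
    also have "\<dots> < e / (Bf + Bg + 2) * (Bf + Bg + 2)"
      using Bf Bg e by (intro mult_strict_left_mono) auto
    finally show "d * (Bf + Bg + 1) < e" using Bf Bg by simp
  qed
  obtain N1 where N1: "\<forall>n\<ge>N1. \<forall>t\<in>{a..b}. \<bar>poly (P n) t - f t\<bar> < d"
    using P d unfolding poly_unif_conv_def by blast
  obtain N2 where N2: "\<forall>n\<ge>N2. \<forall>t\<in>{a..b}. \<bar>poly (Q n) t - g t\<bar> < d"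
    using Q d unfolding poly_unif_conv_def by blast
  have "\<bar>poly (P n * Q n) t - f t * g t\<bar> < e" if "n \<ge> max N1 N2" "t \<in> {a..b}" for n t
  proof -
    let ?p = "poly (P n) t" and ?q = "poly (Q n) t"
    have p: "\<bar>?p - f t\<bar> < d" and q: "\<bar>?q - g t\<bar> < d" using N1 N2 that by auto
    have qb: "\<bar>?q\<bar> \<le> Bg + 1" using q d Bg(2)[OF that(2)] by linarith
    have "\<bar>?p * ?q - f t * g t\<bar> = \<bar>(?p - f t) * ?q + f t * (?q - g t)\<bar>"
      by (simp add: algebra_simps)
    also have "\<dots> \<le> \<bar>?p - f t\<bar> * \<bar>?q\<bar> + \<bar>f t\<bar> * \<bar>?q - g t\<bar>"
      by (rule order_trans[OF abs_triangle_ineq]) (simp add: abs_mult)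
    also have "\<dots> \<le> d * (Bg + 1) + Bf * d"
      using p q qb Bf(2)[OF that(2)] by (intro add_mono mult_mono) auto
    also have "\<dots> < e" using d(3) by (simp add: algebra_simps)
    finally show ?thesis by simp
  qed
  then show "\<exists>N. \<forall>n\<ge>N. \<forall>t\<in>{a..b}. \<bar>poly (P n * Q n) t - f t * g t\<bar> < e" by blast
qed

context
  fixes T :: "'a::chilbert \<Rightarrow> 'a"
  assumes bT: "bounded_op T" and sT: "selfadjoint T"
begin

lemma poly_unif_conv_cauchy:
  assumes "poly_unif_conv P f {spec_lo T..spec_hi T}" "e > 0"
  shows "\<exists>N. \<forall>m\<ge>N. \<forall>n\<ge>N. opnorm (\<lambda>x. poly_op (P m) T x - poly_op (P n) T x) \<le> e"
proof -
  obtain N where N: "\<forall>n\<ge>N. \<forall>t\<in>{spec_lo T..spec_hi T}. \<bar>poly (P n) t - f t\<bar> < e/2"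
    using assms unfolding poly_unif_conv_def by (meson half_gt_zero)
  have "opnorm (\<lambda>x. poly_op (P m) T x - poly_op (P n) T x) \<le> e" if "m \<ge> N" "n \<ge> N" for m n
  proof (rule opnorm_poly_op_diff_le[OF bT sT])
    fix t assume "t \<in> {spec_lo T..spec_hi T}"
    then have "\<bar>poly (P m) t - f t\<bar> < e/2" "\<bar>poly (P n) t - f t\<bar> < e/2" using N that by auto
    then show "\<bar>poly (P m) t - poly (P n) t\<bar> \<le> e" by linarith
  qed
  then show ?thesis by blast
qed

lemma poly_op_limit_indep:
  assumes P: "poly_unif_conv P f {spec_lo T..spec_hi T}" and P0: "poly_unif_conv P0 f {spec_lo T..spec_hi T}"
    and bS: "bounded_op S" and lim0: "(\<lambda>n. opnorm (\<lambda>x. poly_op (P0 n) T x - S x)) \<longlonglongrightarrow> 0"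
  shows "(\<lambda>n. opnorm (\<lambda>x. poly_op (P n) T x - S x)) \<longlonglongrightarrow> 0"
proof (rule nonneg_LIMSEQ_0I)
  let ?I = "{spec_lo T..spec_hi T}"
  have bP: "bounded_op (poly_op Q T)" for Q by (rule bounded_op_poly_op[OF bT])
  show "0 \<le> opnorm (\<lambda>x. poly_op (P n) T x - S x)" for n
    by (rule opnorm_nonneg) (simp add: bounded_op_diff_op bP bS)
  fix e :: real assume e: "e > 0"
  obtain N1 where N1: "\<forall>n\<ge>N1. \<forall>t\<in>?I. \<bar>poly (P n) t - f t\<bar> < e/4"
    using P e unfolding poly_unif_conv_def by (meson zero_less_divide_iff zero_less_numeral)
  obtain N2 where N2: "\<forall>n\<ge>N2. \<forall>t\<in>?I. \<bar>poly (P0 n) t - f t\<bar> < e/4"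
    using P0 e unfolding poly_unif_conv_def by (meson zero_less_divide_iff zero_less_numeral)
  obtain N3 where N3: "\<forall>n\<ge>N3. opnorm (\<lambda>x. poly_op (P0 n) T x - S x) < e/2"
    using LIMSEQ_0_eventually_less[OF lim0, of "e/2"] e by auto
  define m where "m = max N2 N3"
  have "opnorm (\<lambda>x. poly_op (P n) T x - S x) \<le> e" if n: "n \<ge> N1" for n
  proof -
    have "opnorm (\<lambda>x. poly_op (P n) T x - S x) \<le>
        opnorm (\<lambda>x. poly_op (P n) T x - poly_op (P0 m) T x) + opnorm (\<lambda>x. poly_op (P0 m) T x - S x)"
      by (rule opnorm_diff_triangle) (simp_all add: bP bS)
    also have "opnorm (\<lambda>x. poly_op (P n) T x - poly_op (P0 m) T x) \<le> e/2"
    proof (rule opnorm_poly_op_diff_le[OF bT sT])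
      fix t assume "t \<in> ?I"
      then have "\<bar>poly (P n) t - f t\<bar> < e/4" "\<bar>poly (P0 m) t - f t\<bar> < e/4"
        using N1 N2 n by (auto simp: m_def)
      then show "\<bar>poly (P n) t - poly (P0 m) t\<bar> \<le> e/2" by linarith
    qed
    also have "opnorm (\<lambda>x. poly_op (P0 m) T x - S x) < e/2" using N3 by (simp add: m_def)
    finally show ?thesis by simp
  qed
  then show "\<exists>N. \<forall>n\<ge>N. opnorm (\<lambda>x. poly_op (P n) T x - S x) \<le> e" by blast
qed

lemma fcalc_limit:
  assumes cf: "continuous_on {spec_lo T..spec_hi T} f"
  shows "bounded_op (fcalc f T)"
    and "poly_unif_conv P f {spec_lo T..spec_hi T}
      \<Longrightarrow> (\<lambda>n. opnorm (\<lambda>x. poly_op (P n) T x - fcalc f T x)) \<longlonglongrightarrow> 0"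
proof -
  let ?I = "{spec_lo T..spec_hi T}"
  let ?prop = "\<lambda>S. bounded_op S
    \<and> (\<forall>P. poly_unif_conv P f ?I \<longrightarrow> (\<lambda>n. opnorm (\<lambda>x. poly_op (P n) T x - S x)) \<longlonglongrightarrow> 0)"
  obtain P0 where P0: "poly_unif_conv P0 f ?I" using poly_unif_conv_from_above[OF compact_Icc cf] .
  obtain S where bS: "bounded_op S" and lim0: "(\<lambda>n. opnorm (\<lambda>x. poly_op (P0 n) T x - S x)) \<longlonglongrightarrow> 0"
    using bounded_op_complete[of "\<lambda>n. poly_op (P0 n) T"] bounded_op_poly_op[OF bT]
      poly_unif_conv_cauchy[OF P0] by blast
  have "?prop S" using bS poly_op_limit_indep[OF _ P0 bS lim0] by blast
  moreover have "S' = S" if "?prop S'" for S'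
    using that P0 lim0 by (intro opnorm_limit_unique[OF bS, of S' "\<lambda>n. poly_op (P0 n) T"])
      (auto simp: bounded_op_poly_op[OF bT])
  ultimately have "?prop (fcalc f T)" unfolding fcalc_eq_The by (rule theI)
  then show "bounded_op (fcalc f T)"
    and "poly_unif_conv P f ?I \<Longrightarrow> (\<lambda>n. opnorm (\<lambda>x. poly_op (P n) T x - fcalc f T x)) \<longlonglongrightarrow> 0"
    by blast+
qed

lemma fcalc_hlim:
  assumes cf: "continuous_on {spec_lo T..spec_hi T} f" and P: "poly_unif_conv P f {spec_lo T..spec_hi T}"
  shows "hlim (\<lambda>n. poly_op (P n) T x) (fcalc f T x)"
  unfolding hlim_def
proof (rule Lim_null_comparison)
  have "bounded_op (\<lambda>x. poly_op (P n) T x - fcalc f T x)" for n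
    by (simp add: bounded_op_diff_op bounded_op_poly_op bT fcalc_limit(1)[OF cf])
  then have "hnorm (poly_op (P n) T x - fcalc f T x)
      \<le> opnorm (\<lambda>x. poly_op (P n) T x - fcalc f T x) * hnorm x" for n
    by (rule hnorm_le_opnorm)
  then show "\<forall>\<^sub>F n in sequentially. norm (hnorm (poly_op (P n) T x - fcalc f T x))
      \<le> opnorm (\<lambda>x. poly_op (P n) T x - fcalc f T x) * hnorm x"
    by simp
  show "(\<lambda>n. opnorm (\<lambda>x. poly_op (P n) T x - fcalc f T x) * hnorm x) \<longlonglongrightarrow> 0"
    using fcalc_limit(2)[OF cf P] by (rule tendsto_mult_left_zero)
qed

lemma fcalc_selfadjoint:
  assumes cf: "continuous_on {spec_lo T..spec_hi T} f"
  shows "selfadjoint (fcalc f T)"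
  unfolding selfadjoint_def
proof (intro allI)
  fix x y
  obtain P where P: "poly_unif_conv P f {spec_lo T..spec_hi T}"
    using poly_unif_conv_from_above[OF compact_Icc cf] .
  have "(\<lambda>n. hinner (poly_op (P n) T x) y) = (\<lambda>n. hinner x (poly_op (P n) T y))"
    using selfadjoint_poly_op[OF sT] by (simp add: selfadjoint_def)
  moreover have "(\<lambda>n. hinner (poly_op (P n) T x) y) \<longlonglongrightarrow> hinner (fcalc f T x) y"
    by (rule hlim_hinner_left[OF fcalc_hlim[OF cf P]])
  moreover have "(\<lambda>n. hinner x (poly_op (P n) T y)) \<longlonglongrightarrow> hinner x (fcalc f T y)"
    by (rule hlim_hinner_right[OF fcalc_hlim[OF cf P]])
  ultimately show "hinner (fcalc f T x) y = hinner x (fcalc f T y)" using LIMSEQ_unique by metis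
qed

lemma fcalc_positive:
  assumes cf: "continuous_on {spec_lo T..spec_hi T} f"
    and f0: "\<And>t. t \<in> {spec_lo T..spec_hi T} \<Longrightarrow> 0 \<le> f t"
  shows "positive_op (fcalc f T)"
  unfolding positive_op_def
proof
  fix x
  obtain P where P: "poly_unif_conv P f {spec_lo T..spec_hi T}"
    and above: "\<And>n t. t \<in> {spec_lo T..spec_hi T} \<Longrightarrow> f t \<le> poly (P n) t"
    using poly_unif_conv_from_above[OF compact_Icc cf] by blast
  have "positive_op (poly_op (P n) T)" for n
    using above f0 by (intro positive_op_poly_op[OF bT sT]) (meson atLeastAtMost_iff order_trans)
  moreover have "(\<lambda>n. Re (hinner x (poly_op (P n) T x))) \<longlonglongrightarrow> Re (hinner x (fcalc f T x))"
    by (intro tendsto_Re hlim_hinner_right fcalc_hlim[OF cf P])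
  ultimately show "0 \<le> Re (hinner x (fcalc f T x))"
    by (intro LIMSEQ_le_const) (auto simp: positive_op_def)
qed

lemma fcalc_poly: "fcalc (poly Q) T = poly_op Q T"
proof
  fix x
  have "poly_unif_conv (\<lambda>n. Q) (poly Q) {spec_lo T..spec_hi T}" by (simp add: poly_unif_conv_def)
  then have "hlim (\<lambda>n. poly_op Q T x) (fcalc (poly Q) T x)"
    by (intro fcalc_hlim) (simp_all add: continuous_on_poly)
  then show "fcalc (poly Q) T x = poly_op Q T x" using hlim_const hlim_unique by metis
qed

lemma fcalc_cong:
  assumes "\<And>t. t \<in> {spec_lo T..spec_hi T} \<Longrightarrow> f t = g t"
  shows "fcalc f T = fcalc g T"
proof -
  have "poly_unif_conv P f {spec_lo T..spec_hi T} = poly_unif_conv P g {spec_lo T..spec_hi T}" for P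
    using assms unfolding poly_unif_conv_def by (metis (no_types, lifting))
  then show ?thesis unfolding fcalc_eq_The by simp
qed

lemma fcalc_add_poly:
  assumes cg: "continuous_on {spec_lo T..spec_hi T} g"
  shows "fcalc (\<lambda>t. g t + poly Q t) T x = fcalc g T x + poly_op Q T x"
proof -
  obtain P where P: "poly_unif_conv P g {spec_lo T..spec_hi T}"
    using poly_unif_conv_from_above[OF compact_Icc cg] .
  have "poly_unif_conv (\<lambda>n. P n + Q) (\<lambda>t. g t + poly Q t) {spec_lo T..spec_hi T}"
    using P by (simp add: poly_unif_conv_def)
  then have "hlim (\<lambda>n. poly_op (P n + Q) T x) (fcalc (\<lambda>t. g t + poly Q t) T x)"
    by (intro fcalc_hlim continuous_intros cg)
  then have "hlim (\<lambda>n. poly_op (P n) T x + poly_op Q T x) (fcalc (\<lambda>t. g t + poly Q t) T x)"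
    by (simp add: poly_op_add)
  moreover have "hlim (\<lambda>n. poly_op (P n) T x + poly_op Q T x) (fcalc g T x + poly_op Q T x)"
    by (rule hlim_add[OF fcalc_hlim[OF cg P] hlim_const])
  ultimately show ?thesis using hlim_unique by blast
qed

lemma hlim_poly_op_approx:
  assumes cf: "continuous_on {spec_lo T..spec_hi T} f"
    and P: "poly_unif_conv P f {spec_lo T..spec_hi T}" and X: "hlim X y"
  shows "hlim (\<lambda>n. poly_op (P n) T (X n)) (fcalc f T y)"
proof (rule hlimI)
  fix e :: real assume e: "e > 0"
  obtain B where B: "B \<ge> 0" "\<And>t. t \<in> {spec_lo T..spec_hi T} \<Longrightarrow> \<bar>f t\<bar> \<le> B"
    using continuous_on_Icc_abs_bound[OF cf] by blast
  obtain N0 where N0: "\<forall>n\<ge>N0. \<forall>t\<in>{spec_lo T..spec_hi T}. \<bar>poly (P n) t - f t\<bar> < 1"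
    using P zero_less_one unfolding poly_unif_conv_def by blast
  have opP: "opnorm (poly_op (P n) T) \<le> B + 1" if "n \<ge> N0" for n
  proof (rule opnorm_poly_op_le[OF bT sT])
    fix t assume "spec_lo T \<le> t" "t \<le> spec_hi T"
    then have "\<bar>poly (P n) t - f t\<bar> < 1" "\<bar>f t\<bar> \<le> B" using N0 that B(2) by auto
    then show "\<bar>poly (P n) t\<bar> \<le> B + 1" by linarith
  qed
  obtain N1 where N1: "\<forall>n\<ge>N1. hnorm (X n - y) < e / (2 * (B + 1))"
    using hlimD[OF X, of "e / (2 * (B + 1))"] e B by auto
  obtain N2 where N2: "\<forall>n\<ge>N2. hnorm (poly_op (P n) T y - fcalc f T y) < e / 2"
    using hlimD[OF fcalc_hlim[OF cf P], of "e / 2"] e by auto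
  have "hnorm (poly_op (P n) T (X n) - fcalc f T y) \<le> e" if n: "n \<ge> max N0 (max N1 N2)" for n
  proof -
    have bPn: "bounded_op (poly_op (P n) T)" by (rule bounded_op_poly_op[OF bT])
    have "poly_op (P n) T (X n) - fcalc f T y
        = poly_op (P n) T (X n - y) + (poly_op (P n) T y - fcalc f T y)"
      by (simp add: bounded_op_diff[OF bPn])
    then have "hnorm (poly_op (P n) T (X n) - fcalc f T y)
        \<le> hnorm (poly_op (P n) T (X n - y)) + hnorm (poly_op (P n) T y - fcalc f T y)"
      by (metis hnorm_triangle_ineq)
    also have "hnorm (poly_op (P n) T (X n - y)) \<le> opnorm (poly_op (P n) T) * hnorm (X n - y)"
      by (rule hnorm_le_opnorm[OF bPn])
    also have "\<dots> \<le> (B + 1) * (e / (2 * (B + 1)))"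
      using opP[of n] N1 n B(1) by (intro mult_mono) (auto simp: less_imp_le)
    also have "(B + 1) * (e / (2 * (B + 1))) = e / 2" using B(1) by (simp add: field_simps)
    finally have "hnorm (poly_op (P n) T (X n) - fcalc f T y)
        \<le> e / 2 + hnorm (poly_op (P n) T y - fcalc f T y)" by simp
    moreover have "hnorm (poly_op (P n) T y - fcalc f T y) < e / 2" using N2 n by simp
    ultimately show ?thesis by linarith
  qed
  then show "\<exists>N. \<forall>n\<ge>N. hnorm (poly_op (P n) T (X n) - fcalc f T y) \<le> e" by blast
qed

lemma fcalc_mult:
  assumes cf: "continuous_on {spec_lo T..spec_hi T} f" and cg: "continuous_on {spec_lo T..spec_hi T} g"
  shows "fcalc (\<lambda>t. f t * g t) T x = fcalc f T (fcalc g T x)"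
proof -
  obtain P where P: "poly_unif_conv P f {spec_lo T..spec_hi T}"
    using poly_unif_conv_from_above[OF compact_Icc cf] by blast
  obtain Q where Q: "poly_unif_conv Q g {spec_lo T..spec_hi T}"
    using poly_unif_conv_from_above[OF compact_Icc cg] by blast
  have "hlim (\<lambda>n. poly_op (P n * Q n) T x) (fcalc (\<lambda>t. f t * g t) T x)"
    by (rule fcalc_hlim[OF continuous_on_mult[OF cf cg] poly_unif_conv_mult[OF cf cg P Q]])
  moreover have "hlim (\<lambda>n. poly_op (P n) T (poly_op (Q n) T x)) (fcalc f T (fcalc g T x))"
    by (rule hlim_poly_op_approx[OF cf P fcalc_hlim[OF cg Q]])
  ultimately show ?thesis by (simp add: poly_op_mult[OF bT] hlim_unique)
qed

end

context
  fixes T :: "'a::chilbert \<Rightarrow> 'a"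
  assumes bT: "bounded_op T" and sT: "selfadjoint T"
begin

lemma square_in_spec_interval:
  assumes "t \<in> {spec_lo T..spec_hi T}"
  shows "t * t \<in> {spec_lo (\<lambda>x. T (T x))..spec_hi (\<lambda>x. T (T x))}"
proof -
  define h where "h = spec_hi (\<lambda>x. T (T x))"
  have bT2: "bounded_op (\<lambda>x. T (T x))" by (rule bounded_op_comp[OF bT bT])
  have h0: "0 \<le> h" unfolding h_def by (rule spec_hi_ge_0[OF bT2])
  have b: "\<bar>Re (hinner x (T x))\<bar> \<le> sqrt h" if "hnorm x \<le> 1" for x
  proof -
    have "hnorm (T x) ^ 2 = Re (hinner x (T (T x)))"
      using sT by (simp add: selfadjoint_def hnorm_sq)
    also have "\<dots> \<le> h * hnorm x ^ 2" unfolding h_def by (rule qform_le_spec_hi[OF bT2])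
    also have "\<dots> \<le> h" using that h0 by (simp add: mult_left_le power_le_one)
    finally have "hnorm (T x) \<le> sqrt h" by (simp add: real_le_rsqrt)
    moreover have "\<bar>Re (hinner x (T x))\<bar> \<le> hnorm x * hnorm (T x)"
      using abs_Re_le_cmod hnorm_cauchy_schwarz by (rule order_trans)
    ultimately show ?thesis using that by (smt (verit) hnorm_nonneg mult_left_le_one_le)
  qed
  have "spec_hi T \<le> sqrt h"
    unfolding spec_hi_def using b by (intro cSup_least) (auto intro!: exI[of _ 0] simp: abs_le_iff)
  moreover have "- sqrt h \<le> spec_lo T"
    unfolding spec_lo_def
  proof (rule cInf_greatest)
    fix q assume "q \<in> {Re (hinner x (T x)) |x. hnorm x \<le> 1}"
    then obtain x where "q = Re (hinner x (T x))" "hnorm x \<le> 1" by blast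
    then show "- sqrt h \<le> q" using b[of x] by linarith
  qed (auto intro!: exI[of _ 0])
  ultimately have "\<bar>t\<bar> \<le> sqrt h" using assms by auto
  then have "t * t \<le> h" using h0 by (metis real_sqrt_le_iff real_sqrt_abs2)
  moreover have "spec_lo (\<lambda>x. T (T x)) \<le> t * t"
    using spec_lo_le_0[OF bT2] zero_le_square[of t] by linarith
  ultimately show ?thesis by (simp add: h_def)
qed

lemma poly_unif_conv_pcompose_square:
  assumes "poly_unif_conv P sqrt {spec_lo (\<lambda>x. T (T x))..spec_hi (\<lambda>x. T (T x))}"
  shows "poly_unif_conv (\<lambda>n. pcompose (P n) [:0, 0, 1:]) abs {spec_lo T..spec_hi T}"
  unfolding poly_unif_conv_def
proof (intro allI impI)
  fix e :: real assume "e > 0"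
  then obtain N where N: "\<forall>n\<ge>N. \<forall>s\<in>{spec_lo (\<lambda>x. T (T x))..spec_hi (\<lambda>x. T (T x))}.
      \<bar>poly (P n) s - sqrt s\<bar> < e"
    using assms unfolding poly_unif_conv_def by blast
  have "\<bar>poly (pcompose (P n) [:0, 0, 1:]) t - \<bar>t\<bar>\<bar> < e"
    if "n \<ge> N" "t \<in> {spec_lo T..spec_hi T}" for n t
  proof -
    have "poly (pcompose (P n) [:0, 0, 1:]) t = poly (P n) (t * t)" by (simp add: poly_pcompose)
    moreover have "\<bar>poly (P n) (t * t) - sqrt (t * t)\<bar> < e"
      using N that(1) square_in_spec_interval[OF that(2)] by blast
    ultimately show ?thesis by simp
  qed
  then show "\<exists>N. \<forall>n\<ge>N. \<forall>t\<in>{spec_lo T..spec_hi T}.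
      \<bar>poly (pcompose (P n) [:0, 0, 1:]) t - \<bar>t\<bar>\<bar> < e" by blast
qed

lemma absop_eq_fcalc_abs: "absop T = fcalc abs T"
proof
  fix x
  let ?T2 = "\<lambda>x. T (T x)"
  have bT2: "bounded_op ?T2" by (rule bounded_op_comp[OF bT bT])
  have sT2: "selfadjoint ?T2" using sT by (simp add: selfadjoint_def)
  have csq: "continuous_on {spec_lo ?T2..spec_hi ?T2} sqrt" by (intro continuous_intros)
  obtain P where P: "poly_unif_conv P sqrt {spec_lo ?T2..spec_hi ?T2}"
    using poly_unif_conv_from_above[OF compact_Icc csq] by blast
  have "poly_op [:0, 0, 1:] T = ?T2"
    using poly_op_mult[OF bT, of "[:0, 1:]" "[:0, 1:]"] by (simp add: poly_op_X[OF bT] fun_eq_iff)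
  then have "poly_op (pcompose (P n) [:0, 0, 1:]) T x = poly_op (P n) ?T2 x" for n
    by (simp add: poly_op_pcompose[OF bT])
  moreover have "hlim (\<lambda>n. poly_op (pcompose (P n) [:0, 0, 1:]) T x) (fcalc abs T x)"
    by (intro fcalc_hlim[OF bT sT] poly_unif_conv_pcompose_square P continuous_intros)
  moreover have "hlim (\<lambda>n. poly_op (P n) ?T2 x) (fcalc sqrt ?T2 x)"
    by (rule fcalc_hlim[OF bT2 sT2 csq P])
  ultimately have "fcalc sqrt ?T2 x = fcalc abs T x" using hlim_unique by simp
  then show "absop T x = fcalc abs T x" by (simp add: absop_def adjoint_selfadjoint[OF sT])
qed

lemma continuous_on_abs_spec: "continuous_on {spec_lo T..spec_hi T} abs"
  by (intro continuous_intros)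

lemma bounded_op_absop: "bounded_op (absop T)"
  unfolding absop_eq_fcalc_abs by (rule fcalc_limit(1)[OF bT sT continuous_on_abs_spec])

lemma selfadjoint_absop: "selfadjoint (absop T)"
  unfolding absop_eq_fcalc_abs by (rule fcalc_selfadjoint[OF bT sT continuous_on_abs_spec])

lemma positive_op_absop: "positive_op (absop T)"
  unfolding absop_eq_fcalc_abs by (rule fcalc_positive[OF bT sT continuous_on_abs_spec]) simp

text \<open>Both \<open>|T| + T\<close> and \<open>|T| - T\<close> are \<open>f(T)\<close> for nonnegative f.\<close>
lemma abs_qform_le_absop: "\<bar>Re (hinner x (T x))\<bar> \<le> Re (hinner x (absop T x))"
proof -
  have lin: "poly_op [:0, c:] T x = complex_of_real c *\<^sub>H T x" for c
    using poly_op_smult[of c "[:0, 1:]" T x] by (simp add: poly_op_X[OF bT])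
  have "0 \<le> Re (hinner x (fcalc (\<lambda>t. \<bar>t\<bar> + poly [:0, c:] t) T x))" if "c = 1 \<or> c = -1" for c
  proof -
    have "0 \<le> \<bar>t\<bar> + c * t" for t using that by auto
    then have "positive_op (fcalc (\<lambda>t. \<bar>t\<bar> + poly [:0, c:] t) T)"
      by (intro fcalc_positive[OF bT sT] continuous_intros) (simp add: mult.commute)
    then show ?thesis by (simp add: positive_op_def)
  qed
  moreover have "fcalc (\<lambda>t. \<bar>t\<bar> + poly [:0, c:] t) T x = absop T x + complex_of_real c *\<^sub>H T x" for c
    using fcalc_add_poly[OF bT sT continuous_on_abs_spec, of "[:0, c:]" x]
    by (simp add: absop_eq_fcalc_abs lin)
  ultimately have "0 \<le> Re (hinner x (absop T x)) + c * Re (hinner x (T x))" if "c = 1 \<or> c = -1" for c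
    using that by (simp add: hinner_add_right hinner_scale_right)
  from this[of 1] this[of "-1"] show ?thesis by auto
qed

end

lemma powr_above_tangent:
  fixes k x c :: real
  assumes k: "k \<ge> 1" and x: "x \<ge> 0" and c: "c \<ge> 0"
  shows "c powr k + k * c powr (k - 1) * (x - c) \<le> x powr k"
proof (cases "c = 0")
  case True then show ?thesis using x by simp
next
  case False
  then have cp: "c > 0" using c by simp
  show ?thesis
  proof (cases "x = 0")
    case True
    have "c powr (k - 1) * c = c powr (k - 1) * c powr 1" using cp by simp
    also have "\<dots> = c powr k" by (simp only: powr_add[symmetric] diff_add_cancel)
    finally have "c powr (k - 1) * c = c powr k" .
    then have "c powr k + k * c powr (k - 1) * (x - c) = (1 - k) * c powr k"
      using True by (simp add: algebra_simps)
    also have "\<dots> \<le> 0" using k by (simp add: mult_nonpos_nonneg)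
    finally show ?thesis using True by simp
  next
    case False
    then have xp: "x > 0" using x by simp
    have "(\<lambda>y. y powr k) x - (\<lambda>y. y powr k) c \<ge> k * c powr (k - 1) * (x - c)"
    proof (rule convex_on_imp_above_tangent[where A = "{0<..}"])
      show "convex_on {0<..} (\<lambda>y. y powr k)" by (rule powr_convex[OF k])
      show "connected {(0::real)<..}" by simp
      show "c \<in> interior {0<..}" using cp by (subst interior_open) auto
      show "x \<in> {0<..}" using xp by simp
      show "((\<lambda>y. y powr k) has_field_derivative k * c powr (k - 1)) (at c within {0<..})"
        using has_real_derivative_powr[OF cp] by (rule has_field_derivative_at_within)
    qed
    then show ?thesis by simp
  qed
qed

lemma powr_midpoint_le:
  fixes k y1 y2 :: real
  assumes k: "k \<ge> 1" and y: "y1 \<ge> 0" "y2 \<ge> 0"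
  shows "((y1 + y2) / 2) powr k \<le> (y1 powr k + y2 powr k) / 2"
proof -
  define m where "m = (y1 + y2) / 2"
  have m: "m \<ge> 0" using y by (simp add: m_def)
  have "m powr k + k * m powr (k - 1) * (y1 - m) \<le> y1 powr k"
    by (rule powr_above_tangent[OF k y(1) m])
  moreover have "m powr k + k * m powr (k - 1) * (y2 - m) \<le> y2 powr k"
    by (rule powr_above_tangent[OF k y(2) m])
  moreover have "k * m powr (k - 1) * (y1 - m) + k * m powr (k - 1) * (y2 - m) = 0"
    by (simp add: m_def algebra_simps)
  ultimately have "2 * m powr k \<le> y1 powr k + y2 powr k" by linarith
  then show ?thesis by (simp add: m_def)
qed

lemma power2_powr_half:
  fixes x k :: real
  assumes "x \<ge> 0"
  shows "(x^2) powr (k/2) = x powr k"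
proof (cases "x = 0")
  case True then show ?thesis by simp
next
  case False
  then have "x > 0" using assms by simp
  then have "x^2 = x powr 2" using powr_realpow[of x 2] by simp
  then show ?thesis by (simp add: powr_powr)
qed

lemma young_weighted:
  fixes a b al be :: real
  assumes "a \<ge> 0" "b \<ge> 0" "al \<ge> 0" "be \<ge> 0" "al + be = 1"
  shows "a powr al * b powr be \<le> al * a + be * b"
proof (cases "a = 0 \<or> b = 0")
  case True then show ?thesis using assms by auto
next
  case False then show ?thesis using Youngs_inequality_0[of al be a b] assms by auto
qed

lemma holder_two_terms:
  fixes p q a1 a2 b1 b2 :: real
  assumes pq: "p > 1" "q > 1" "1/p + 1/q = 1"
    and nn: "a1 \<ge> 0" "a2 \<ge> 0" "b1 \<ge> 0" "b2 \<ge> 0"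
  shows "a1 powr (1/p) * b1 powr (1/q) + a2 powr (1/p) * b2 powr (1/q)
         \<le> (a1 + a2) powr (1/p) * (b1 + b2) powr (1/q)"
proof (cases "a1 + a2 = 0 \<or> b1 + b2 = 0")
  case True
  then have "(a1 = 0 \<and> a2 = 0) \<or> (b1 = 0 \<and> b2 = 0)" using nn by auto
  then show ?thesis by auto
next
  case False
  define A where "A = a1 + a2"
  define B where "B = b1 + b2"
  have A: "A > 0" and B: "B > 0" using False nn by (auto simp: A_def B_def)
  have pos: "1/p \<ge> 0" "1/q \<ge> 0" using pq by auto
  have y: "(a / A) powr (1/p) * (b / B) powr (1/q) \<le> (1/p) * (a / A) + (1/q) * (b / B)"
    if "a \<ge> 0" "b \<ge> 0" for a b
    by (rule young_weighted) (use that A B pos pq in auto)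
  have e: "a powr (1/p) * b powr (1/q)
      = A powr (1/p) * B powr (1/q) * ((a / A) powr (1/p) * (b / B) powr (1/q))"
    if "a \<ge> 0" "b \<ge> 0" for a b
  proof -
    have "a = A * (a / A)" "b = B * (b / B)" using A B by auto
    then have "a powr (1/p) * b powr (1/q) = (A * (a / A)) powr (1/p) * (B * (b / B)) powr (1/q)"
      by simp
    also have "\<dots> = A powr (1/p) * B powr (1/q) * ((a / A) powr (1/p) * (b / B) powr (1/q))"
      by (simp only: powr_mult mult.assoc mult.left_commute)
    finally show ?thesis .
  qed
  have "a1 powr (1/p) * b1 powr (1/q) + a2 powr (1/p) * b2 powr (1/q)
      = A powr (1/p) * B powr (1/q)
        * ((a1 / A) powr (1/p) * (b1 / B) powr (1/q) + (a2 / A) powr (1/p) * (b2 / B) powr (1/q))"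
    using e[OF nn(1) nn(3)] e[OF nn(2) nn(4)] by (simp add: distrib_left)
  also have "\<dots> \<le> A powr (1/p) * B powr (1/q)
      * (((1/p) * (a1 / A) + (1/q) * (b1 / B)) + ((1/p) * (a2 / A) + (1/q) * (b2 / B)))"
    using y[OF nn(1) nn(3)] y[OF nn(2) nn(4)] by (intro mult_left_mono add_mono) auto
  also have "((1/p) * (a1 / A) + (1/q) * (b1 / B)) + ((1/p) * (a2 / A) + (1/q) * (b2 / B))
      = (1/p) * ((a1 + a2) / A) + (1/q) * ((b1 + b2) / B)"
    by (simp add: algebra_simps add_divide_distrib)
  also have "\<dots> = 1" using A B pq by (simp add: A_def B_def)
  finally show ?thesis by (simp add: A_def B_def)
qed

lemma mean_square_powr_le_holder:
  fixes a b a1 a2 b1 b2 M N r p q :: real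
  assumes r: "r \<ge> 2" and pq: "p > 1" "q > 1" "1/p + 1/q = 1"
    and nn: "a1 \<ge> 0" "a2 \<ge> 0" "b1 \<ge> 0" "b2 \<ge> 0"
    and ka: "\<bar>a\<bar> powr r \<le> a1 powr (1/p) * b1 powr (1/q)"
    and kb: "\<bar>b\<bar> powr r \<le> a2 powr (1/p) * b2 powr (1/q)"
    and M: "a1 + a2 \<le> M" and N: "b1 + b2 \<le> N"
  shows "((a^2 + b^2) / 2) powr (r / 2) \<le> 1 / 2 * M powr (1/p) * N powr (1/q)"
proof -
  have "((a^2 + b^2) / 2) powr (r / 2) \<le> ((a^2) powr (r/2) + (b^2) powr (r/2)) / 2"
    using r by (intro powr_midpoint_le) auto
  also have "\<dots> = (\<bar>a\<bar> powr r + \<bar>b\<bar> powr r) / 2"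
    using power2_powr_half[of "\<bar>a\<bar>" r] power2_powr_half[of "\<bar>b\<bar>" r] by simp
  also have "\<dots> \<le> (a1 powr (1/p) * b1 powr (1/q) + a2 powr (1/p) * b2 powr (1/q)) / 2"
    using ka kb by simp
  also have "\<dots> \<le> (a1 + a2) powr (1/p) * (b1 + b2) powr (1/q) / 2"
    using holder_two_terms[OF pq nn] by simp
  also have "\<dots> \<le> M powr (1/p) * N powr (1/q) / 2"
    using M N nn pq by (intro divide_right_mono mult_mono powr_mono2) auto
  finally show ?thesis by simp
qed

lemma powr_ge_tangent_square:
  fixes k s t :: real
  assumes "k \<ge> 2" "s \<ge> 0" "t \<ge> 0"
  shows "s powr (k/2) + k/2 * s powr (k/2 - 1) * (t^2 - s) \<le> t powr k"
  using powr_above_tangent[of "k/2" "t^2" s] assms power2_powr_half[of t k] by (simp add: mult.assoc)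

section \<open>McCarthy's inequality and the mixed Schwarz inequality\<close>

lemma continuous_on_spec_of_positive:
  "positive_op X \<Longrightarrow> continuous_on {0..} f \<Longrightarrow> continuous_on {spec_lo X..spec_hi X} f"
  by (rule continuous_on_subset) (auto simp: positive_op_spec_lo)

lemma fcalc_of_positive:
  fixes X :: "'a::chilbert \<Rightarrow> 'a"
  assumes X: "bounded_op X" "selfadjoint X" "positive_op X"
    and f: "continuous_on {0..} f" "\<forall>t\<ge>0. f t \<ge> 0"
  shows "bounded_op (fcalc f X)" "selfadjoint (fcalc f X)" "positive_op (fcalc f X)"
  using fcalc_limit(1)[OF X(1,2)] fcalc_selfadjoint[OF X(1,2)] fcalc_positive[OF X(1,2)]
    continuous_on_spec_of_positive[OF X(3) f(1)] f(2) positive_op_spec_lo[OF X(3)] by auto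

lemma fpow_of_positive:
  fixes X :: "'a::chilbert \<Rightarrow> 'a"
  assumes X: "bounded_op X" "selfadjoint X" "positive_op X"
    and f: "continuous_on {0..} f" "\<forall>t\<ge>0. f t \<ge> 0" and s: "s > 0"
  shows "bounded_op (fpow f s X)" "positive_op (fpow f s X)"
proof -
  note F = fcalc_of_positive[OF X f]
  have "continuous_on {0..} (\<lambda>t::real. t powr s)"
    using s by (intro continuous_on_powr' continuous_intros) auto
  then show "bounded_op (fpow f s X)" "positive_op (fpow f s X)"
    unfolding fpow_def using fcalc_of_positive[OF F] by auto
qed

text \<open>The function \<open>t^k\<close> lies above its tangent in the variable \<open>t^2\<close> at \<open>\<parallel>Sx\<parallel>^2\<close>; the
  tangent is a quadratic polynomial whose quadratic form at x equals \<open>\<parallel>Sx\<parallel>^k\<close>.\<close>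
lemma mccarthy_inequality:
  fixes S :: "'a::chilbert \<Rightarrow> 'a"
  assumes bS: "bounded_op S" and sS: "selfadjoint S" and pS: "positive_op S"
    and k: "k \<ge> 2" and x: "hnorm x = 1"
  shows "hnorm (S x) powr k \<le> Re (hinner x (fcalc (\<lambda>t. t powr k) S x))"
proof -
  define s where "s = hnorm (S x) ^ 2"
  define c where "c = k/2 * s powr (k/2 - 1)"
  define Q where "Q = [:c * s - s powr (k/2), 0, - c:]"
  have cont: "continuous_on {spec_lo S..spec_hi S} (\<lambda>t. t powr k)"
    using k by (intro continuous_on_powr' continuous_intros) (auto simp: positive_op_spec_lo[OF pS])
  have "0 \<le> t powr k + poly Q t" if "t \<in> {spec_lo S..spec_hi S}" for t
  proof -
    have "s powr (k/2) + c * (t^2 - s) \<le> t powr k"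
      using powr_ge_tangent_square[OF k, of s t] that positive_op_spec_lo[OF pS]
      by (simp add: c_def s_def)
    then show ?thesis by (simp add: Q_def power2_eq_square algebra_simps)
  qed
  moreover have "continuous_on {spec_lo S..spec_hi S} (\<lambda>t. t powr k + poly Q t)"
    by (intro continuous_on_add cont continuous_intros)
  ultimately have "positive_op (fcalc (\<lambda>t. t powr k + poly Q t) S)"
    by (intro fcalc_positive[OF bS sS]) auto
  then have "0 \<le> Re (hinner x (fcalc (\<lambda>t. t powr k + poly Q t) S x))"
    by (simp add: positive_op_def)
  also have "\<dots> = Re (hinner x (fcalc (\<lambda>t. t powr k) S x)) + Re (hinner x (poly_op Q S x))"
    by (simp add: fcalc_add_poly[OF bS sS cont] hinner_add_right)
  also have "Re (hinner x (poly_op Q S x)) = - (s powr (k/2))"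
  proof -
    have "poly_op Q S x = complex_of_real (c * s - s powr (k/2)) *\<^sub>H x + complex_of_real (- c) *\<^sub>H S (S x)"
      by (simp add: Q_def poly_op_pCons[OF bS] bounded_op_zero[OF bS] bounded_op_scale[OF bS])
    moreover have "Re (hinner x (S (S x))) = s" using sS by (simp add: selfadjoint_def s_def hnorm_sq)
    ultimately show ?thesis
      using x by (simp add: hinner_add_right hinner_scale_right hinner_self_hnorm algebra_simps)
  qed
  finally show ?thesis by (simp add: s_def power2_powr_half)
qed

lemma mixed_schwarz:
  fixes T :: "'a::chilbert \<Rightarrow> 'a" and f g :: "real \<Rightarrow> real"
  assumes bT: "bounded_op T" and sT: "selfadjoint T"
    and cf: "continuous_on {0..} f" and cg: "continuous_on {0..} g"
    and fg: "\<forall>t\<ge>0. f t * g t = t"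
  shows "\<bar>Re (hinner x (T x))\<bar> \<le> hnorm (fcalc f (absop T) x) * hnorm (fcalc g (absop T) x)"
proof -
  define X where "X = absop T"
  have bX: "bounded_op X" and sX: "selfadjoint X" and pX: "positive_op X"
    unfolding X_def using bounded_op_absop selfadjoint_absop positive_op_absop bT sT by auto
  note cf' = continuous_on_spec_of_positive[OF pX cf] and cg' = continuous_on_spec_of_positive[OF pX cg]
  have "fcalc f X (fcalc g X x) = fcalc (\<lambda>t. f t * g t) X x" by (rule fcalc_mult[OF bX sX cf' cg', symmetric])
  also have "fcalc (\<lambda>t. f t * g t) X = fcalc (poly [:0, 1:]) X"
    using fg positive_op_spec_lo[OF pX] by (intro fcalc_cong[OF bX sX]) auto
  also have "fcalc (poly [:0, 1:]) X x = X x" by (simp add: fcalc_poly[OF bX sX] poly_op_X[OF bX])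
  finally have "hinner x (X x) = hinner (fcalc f X x) (fcalc g X x)"
    using fcalc_selfadjoint[OF bX sX cf'] by (simp add: selfadjoint_def)
  then have "Re (hinner x (X x)) \<le> hnorm (fcalc f X x) * hnorm (fcalc g X x)"
    by (metis complex_Re_le_cmod hnorm_cauchy_schwarz order_trans)
  then show ?thesis using abs_qform_le_absop[OF bT sT, of x] by (simp add: X_def)
qed

lemma mixed_schwarz_powr:
  fixes T :: "'a::chilbert \<Rightarrow> 'a" and f g :: "real \<Rightarrow> real"
  assumes bT: "bounded_op T" and sT: "selfadjoint T"
    and cf: "continuous_on {0..} f" and cg: "continuous_on {0..} g"
    and f0: "\<forall>t\<ge>0. f t \<ge> 0" and g0: "\<forall>t\<ge>0. g t \<ge> 0" and fg: "\<forall>t\<ge>0. f t * g t = t"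
    and r: "r \<ge> 2" and pq: "p > 1" "q > 1" and x: "hnorm x = 1"
  shows "\<bar>Re (hinner x (T x))\<bar> powr r \<le>
           Re (hinner x (fpow f (r * p) (absop T) x)) powr (1/p) *
           Re (hinner x (fpow g (r * q) (absop T) x)) powr (1/q)"
proof -
  define X where "X = absop T"
  have X: "bounded_op X" "selfadjoint X" "positive_op X"
    unfolding X_def using bounded_op_absop selfadjoint_absop positive_op_absop bT sT by auto
  have "r * 1 \<le> r * p" "r * 1 \<le> r * q" using r pq by (intro mult_left_mono; simp)+
  then have rpq: "r * p \<ge> 2" "r * q \<ge> 2" using r by linarith+
  have mc: "hnorm (fcalc h X x) powr (r * s) \<le> Re (hinner x (fpow h (r * s) X x))"
    if "continuous_on {0..} h" "\<forall>t\<ge>0. h t \<ge> 0" "r * s \<ge> 2" for h s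
    unfolding fpow_def using fcalc_of_positive[OF X that(1,2)] that(3) x by (intro mccarthy_inequality) auto
  have split: "hnorm (fcalc h X x) powr r = (hnorm (fcalc h X x) powr (r * s)) powr (1/s)"
    if "s > 1" for h s using that by (simp add: powr_powr)
  have "\<bar>Re (hinner x (T x))\<bar> powr r \<le> (hnorm (fcalc f X x) * hnorm (fcalc g X x)) powr r"
    using mixed_schwarz[OF bT sT cf cg fg, of x] r by (intro powr_mono2) (auto simp: X_def)
  also have "\<dots> = (hnorm (fcalc f X x) powr (r * p)) powr (1/p) * (hnorm (fcalc g X x) powr (r * q)) powr (1/q)"
    by (simp only: powr_mult split[where h=f, OF pq(1)] split[where h=g, OF pq(2)])
  also have "\<dots> \<le> Re (hinner x (fpow f (r * p) X x)) powr (1/p) * Re (hinner x (fpow g (r * q) X x)) powr (1/q)"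
    using mc[OF cf f0 rpq(1)] mc[OF cg g0 rpq(2)] pq by (intro mult_mono powr_mono2) auto
  finally show ?thesis by (simp add: X_def)
qed

lemma qform_le_opnorm:
  "bounded_op S \<Longrightarrow> hnorm x = 1 \<Longrightarrow> Re (hinner x (S x)) \<le> opnorm (S::'a::chilbert \<Rightarrow> 'a)"
  using complex_Re_le_cmod cmod_qform_le_opnorm[of S x] by (metis order_refl order_trans)

lemma mean_square_qforms_powr_le:
  fixes T1 T2 :: "'a::chilbert \<Rightarrow> 'a" and f1 g1 f2 g2 :: "real \<Rightarrow> real"
  assumes T1: "bounded_op T1" "selfadjoint T1" and T2: "bounded_op T2" "selfadjoint T2"
    and c1: "continuous_on {0..} f1" "continuous_on {0..} g1"
    and c2: "continuous_on {0..} f2" "continuous_on {0..} g2"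
    and nn: "\<forall>t\<ge>0. f1 t \<ge> 0 \<and> g1 t \<ge> 0 \<and> f2 t \<ge> 0 \<and> g2 t \<ge> 0"
    and fg1: "\<forall>t\<ge>0. f1 t * g1 t = t" and fg2: "\<forall>t\<ge>0. f2 t * g2 t = t"
    and r: "r \<ge> 2" and pq: "p > 1" "q > 1" "1/p + 1/q = 1" and x: "hnorm x = 1"
  shows "((Re (hinner x (T1 x)) ^ 2 + Re (hinner x (T2 x)) ^ 2) / 2) powr (r / 2) \<le> 1 / 2
           * opnorm (\<lambda>x. fpow f1 (r * p) (absop T1) x + fpow f2 (r * p) (absop T2) x) powr (1 / p)
           * opnorm (\<lambda>x. fpow g1 (r * q) (absop T1) x + fpow g2 (r * q) (absop T2) x) powr (1 / q)"
proof -
  have f0: "\<forall>t\<ge>0. f1 t \<ge> 0" "\<forall>t\<ge>0. f2 t \<ge> 0" and g0: "\<forall>t\<ge>0. g1 t \<ge> 0" "\<forall>t\<ge>0. g2 t \<ge> 0"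
    using nn by auto
  have rpq: "r * p > 0" "r * q > 0" using r pq by auto
  have absT: "bounded_op (absop T)" "selfadjoint (absop T)" "positive_op (absop T)"
    if "bounded_op T" "selfadjoint T" for T :: "'a \<Rightarrow> 'a"
    using bounded_op_absop selfadjoint_absop positive_op_absop that by auto
  note F1 = fpow_of_positive[OF absT[OF T1] c1(1) f0(1) rpq(1)]
  note F2 = fpow_of_positive[OF absT[OF T2] c2(1) f0(2) rpq(1)]
  note G1 = fpow_of_positive[OF absT[OF T1] c1(2) g0(1) rpq(2)]
  note G2 = fpow_of_positive[OF absT[OF T2] c2(2) g0(2) rpq(2)]
  show ?thesis
  proof (rule mean_square_powr_le_holder[OF r pq])
    show "\<bar>Re (hinner x (T1 x))\<bar> powr r \<le> Re (hinner x (fpow f1 (r * p) (absop T1) x)) powr (1/p)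
        * Re (hinner x (fpow g1 (r * q) (absop T1) x)) powr (1/q)"
      by (rule mixed_schwarz_powr[OF T1 c1 f0(1) g0(1) fg1 r pq(1,2) x])
    show "\<bar>Re (hinner x (T2 x))\<bar> powr r \<le> Re (hinner x (fpow f2 (r * p) (absop T2) x)) powr (1/p)
        * Re (hinner x (fpow g2 (r * q) (absop T2) x)) powr (1/q)"
      by (rule mixed_schwarz_powr[OF T2 c2 f0(2) g0(2) fg2 r pq(1,2) x])
    show "Re (hinner x (fpow f1 (r * p) (absop T1) x)) + Re (hinner x (fpow f2 (r * p) (absop T2) x))
        \<le> opnorm (\<lambda>x. fpow f1 (r * p) (absop T1) x + fpow f2 (r * p) (absop T2) x)"
      using qform_le_opnorm[OF bounded_op_add_op[OF F1(1) F2(1)] x] by (simp add: hinner_add_right)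
    show "Re (hinner x (fpow g1 (r * q) (absop T1) x)) + Re (hinner x (fpow g2 (r * q) (absop T2) x))
        \<le> opnorm (\<lambda>x. fpow g1 (r * q) (absop T1) x + fpow g2 (r * q) (absop T2) x)"
      using qform_le_opnorm[OF bounded_op_add_op[OF G1(1) G2(1)] x] by (simp add: hinner_add_right)
  qed (use F1(2) F2(2) G1(2) G2(2) in \<open>auto simp: positive_op_def\<close>)
qed

lemma numrad_powr_le:
  fixes A :: "'a::chilbert \<Rightarrow> 'a"
  assumes hom: "\<And>c x. A (c *\<^sub>H x) = c *\<^sub>H A x"
    and bdd: "\<And>x. hnorm x \<le> 1 \<Longrightarrow> cmod (hinner x (A x)) \<le> K"
    and unit: "\<And>x. hnorm x = 1 \<Longrightarrow> cmod (hinner x (A x)) powr r \<le> R"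
    and R: "R \<ge> 0" and r: "r > 0"
  shows "numrad A powr r \<le> R"
proof -
  have ball: "cmod (hinner x (A x)) \<le> R powr (1/r)" if "hnorm x \<le> 1" for x
  proof (cases "x = 0")
    case False
    define y where "y = complex_of_real (1 / hnorm x) *\<^sub>H x"
    have "x = complex_of_real (hnorm x) *\<^sub>H y"
      using False by (simp add: y_def hscale_hscale hscale_one)
    then have "cmod (hinner x (A x)) = hnorm x ^ 2 * cmod (hinner y (A y))"
      by (metis hom hinner_scale_left hinner_scale_right complex_cnj_complex_of_real norm_mult
          norm_of_real abs_of_nonneg hnorm_nonneg mult.assoc power2_eq_square)
    also have "\<dots> \<le> cmod (hinner y (A y))"
      using that by (simp add: mult_left_le_one_le power_le_one)
    also have "\<dots> = (cmod (hinner y (A y)) powr r) powr (1/r)" using r by (simp add: powr_powr)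
    also have "\<dots> \<le> R powr (1/r)"
      using unit[OF hnorm_normalize[OF False, folded y_def]] r by (intro powr_mono2) auto
    finally show ?thesis .
  qed simp
  have "0 \<in> {cmod (hinner x (A x)) | x. hnorm x \<le> 1}" by (auto intro!: exI[of _ 0])
  then have "0 \<le> numrad A"
    unfolding numrad_def using bdd by (intro cSup_upper) (auto simp: bdd_above_def)
  moreover have "numrad A \<le> R powr (1/r)"
    unfolding numrad_def using ball by (intro cSup_least) (auto intro!: exI[of _ 0])
  ultimately have "numrad A powr r \<le> (R powr (1/r)) powr r" using r by (intro powr_mono2) auto
  also have "\<dots> = R" using r R by (simp add: powr_powr)
  finally show ?thesis .
qed

lemma cmod_qform_cartesian:
  fixes A B C :: "'a::chilbert \<Rightarrow> 'a"
  assumes "selfadjoint B" "selfadjoint C" "\<forall>x. A x = B x + \<i> *\<^sub>H C x"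
  shows "cmod (hinner x (A x)) ^ 2
    = ((Re (hinner x (B x + C x)) ^ 2 + Re (hinner x (B x - C x)) ^ 2) / 2)"
proof -
  have "hinner x (A x) = complex_of_real (Re (hinner x (B x))) + \<i> * complex_of_real (Re (hinner x (C x)))"
    using assms selfadjoint_qform_real by (metis hinner_add_right hinner_scale_right)
  then have "cmod (hinner x (A x)) ^ 2 = Re (hinner x (B x)) ^ 2 + Re (hinner x (C x)) ^ 2"
    by (simp add: cmod_power2)
  then show ?thesis by (simp add: hinner_add_right hinner_diff_right power2_sum power2_diff)
qed

theorem corollary3p12:
  fixes A B C :: "'a::chilbert \<Rightarrow> 'a"
    and r p q :: real
    and f1 g1 f2 g2 :: "real \<Rightarrow> real"
  assumes "bounded_op B" and "selfadjoint B"
    and "bounded_op C" and "selfadjoint C"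
    and "\<forall>x. A x = B x + \<i> *\<^sub>H C x"
    and "r \<ge> 2" and "p > 1" and "q > 1" and "1 / p + 1 / q = 1"
    and "continuous_on {0..} f1" and "continuous_on {0..} g1"
    and "continuous_on {0..} f2" and "continuous_on {0..} g2"
    and "\<forall>t\<ge>0. f1 t \<ge> 0 \<and> g1 t \<ge> 0 \<and> f2 t \<ge> 0 \<and> g2 t \<ge> 0"
    and "\<forall>t\<ge>0. f1 t * g1 t = t" and "\<forall>t\<ge>0. f2 t * g2 t = t"
  shows "numrad A powr r \<le> 1 / 2
           * opnorm (\<lambda>x. fpow f1 (r * p) (absop (\<lambda>y. B y + C y)) x
                        + fpow f2 (r * p) (absop (\<lambda>y. B y - C y)) x) powr (1 / p)
           * opnorm (\<lambda>x. fpow g1 (r * q) (absop (\<lambda>y. B y + C y)) x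
                        + fpow g2 (r * q) (absop (\<lambda>y. B y - C y)) x) powr (1 / q)
       \<and> numrad A powr r \<le> 1 / 2
           * opnorm (\<lambda>x. fpow f1 (r * p) (absop (\<lambda>y. B y + C y)) x
                        + fpow g2 (r * p) (absop (\<lambda>y. B y - C y)) x) powr (1 / p)
           * opnorm (\<lambda>x. fpow g1 (r * q) (absop (\<lambda>y. B y + C y)) x
                        + fpow f2 (r * q) (absop (\<lambda>y. B y - C y)) x) powr (1 / q)"
proof -
  note B = assms(1,2) and C = assms(3,4) and A = assms(5) and r = assms(6)
  have T1: "bounded_op (\<lambda>y. B y + C y)" "selfadjoint (\<lambda>y. B y + C y)"
    using B C by (simp_all add: bounded_op_add_op selfadjoint_add_op)
  have T2: "bounded_op (\<lambda>y. B y - C y)" "selfadjoint (\<lambda>y. B y - C y)"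
    using B C by (simp_all add: bounded_op_diff_op selfadjoint_diff_op)
  have hom: "A (c *\<^sub>H x) = c *\<^sub>H A x" for c x
    by (simp add: A bounded_op_scale B C hscale_add_right hscale_hscale mult.commute)
  have bdd: "cmod (hinner x (A x)) \<le> opnorm B + opnorm C" if "hnorm x \<le> 1" for x
    using norm_triangle_ineq[of "hinner x (B x)" "\<i> * hinner x (C x)"]
      cmod_qform_le_opnorm[OF B(1) that] cmod_qform_le_opnorm[OF C(1) that]
    by (simp add: A hinner_add_right hinner_scale_right norm_mult)
  have unit: "cmod (hinner x (A x)) powr r
      = ((Re (hinner x (B x + C x)) ^ 2 + Re (hinner x (B x - C x)) ^ 2) / 2) powr (r / 2)" for x
    using power2_powr_half[of "cmod (hinner x (A x))" r] cmod_qform_cartesian[OF B(2) C(2) A] by simp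
  have fg2': "\<forall>t\<ge>0. g2 t * f2 t = t" using assms(16) by (simp add: mult.commute)
  show ?thesis
    using r assms(7-9)
    by (intro conjI numrad_powr_le[OF hom bdd] order_trans[OF eq_refl[OF unit]]
        mean_square_qforms_powr_le[OF T1 T2 assms(10-16) r assms(7-9)]
        mean_square_qforms_powr_le[OF T1 T2 assms(10,11,13,12) _ assms(15) fg2' r assms(7-9)])
      (use assms(14) in auto)
qed

end
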